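(* Let $d\ge2$, $\alpha\in(0,\infty)^d$, $N\in\mathbb Z_+$ and $0\le m\le N$. Then both sequences $$\left(\frac{m_{[n]}}{(|\alpha|+m)_{(n)}}\cdot\frac{(|\alpha|+N)_{(n)}}{N_{[n]}}\right)_{0\le n\le N}\qquad\text{and}\qquad\left(\frac{m_{[n]}}{(|\alpha|+m)_{(n)}}\right)_{0\le n\le N}$$ are $\alpha$-HPDS for $DM_\alpha(\cdot;N)$ (terms with $n>m$ vanish).
   Context: $N\Delta_{(d-1)}=\{r\in\mathbb Z^d_+:\sum r_i=N\}$, $|\alpha|=\sum\alpha_i$, $(c)_{(k)}=\Gamma(c+k)/\Gamma(c)$, $c_{[k]}=c(c-1)\cdots(c-k+1)$. $DM_\alpha(r;N)=\binom{N}{r}\prod(\alpha_i)_{(r_i)}/(|\alpha|)_{(N)}$. Hahn kernel $H^\alpha_n(r,s)=\sum_kP_k(r)P_k(s)$, $(P_k)$ an orthonormal basis in $L^2(DM_\alpha(\cdot;N))$ of the polynomials of degree $\le n$ orthogonal to all polynomials of lower degree. $(\rho_n)_{0\le n\le N}$ is an $\alpha$-HPDS for $DM_\alpha(\cdot;N)$ if $\rho_0=1$ and $\sum_{n=0}^N\rho_nH^\alpha_n(r,s)\ge0$ for all $r,s\in N\Delta_{(d-1)}$. *)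

theory Defs
  imports Complex_Main
begin

(* Points of N Delta_(d-1): functions nat => nat supported on {..<d} with coordinate sum N *)
definition simplex :: "nat \<Rightarrow> nat \<Rightarrow> (nat \<Rightarrow> nat) set" where
  "simplex d N = {r. (\<forall>i\<ge>d. r i = 0) \<and> (\<Sum>i<d. r i) = N}"

definition abs_alpha :: "nat \<Rightarrow> (nat \<Rightarrow> real) \<Rightarrow> real" where
  "abs_alpha d \<alpha> = (\<Sum>i<d. \<alpha> i)"

definition falling :: "real \<Rightarrow> nat \<Rightarrow> real" where
  "falling c k = (\<Prod>i<k. c - real i)"

(* Dirichlet-multinomial DM_alpha(r;N); rising factorial (c)_(k) = pochhammer c k *)
definition DM :: "nat \<Rightarrow> (nat \<Rightarrow> real) \<Rightarrow> nat \<Rightarrow> (nat \<Rightarrow> nat) \<Rightarrow> real" where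
  "DM d \<alpha> N r = (fact N / (\<Prod>i<d. fact (r i))) * (\<Prod>i<d. pochhammer (\<alpha> i) (r i))
                  / pochhammer (abs_alpha d \<alpha>) N"

definition ip :: "nat \<Rightarrow> (nat \<Rightarrow> real) \<Rightarrow> nat \<Rightarrow> ((nat \<Rightarrow> nat) \<Rightarrow> real) \<Rightarrow> ((nat \<Rightarrow> nat) \<Rightarrow> real) \<Rightarrow> real" where
  "ip d \<alpha> N f g = (\<Sum>r\<in>simplex d N. DM d \<alpha> N r * f r * g r)"

definition mons :: "nat \<Rightarrow> nat \<Rightarrow> (nat \<Rightarrow> nat) set" where
  "mons d n = {a. (\<forall>i\<ge>d. a i = 0) \<and> (\<Sum>i<d. a i) \<le> n}"

(* (restrictions to the simplex of) real polynomials of total degree <= n in d variables *)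
definition polys :: "nat \<Rightarrow> nat \<Rightarrow> nat \<Rightarrow> ((nat \<Rightarrow> nat) \<Rightarrow> real) set" where
  "polys d N n = {f. \<exists>c. \<forall>r\<in>simplex d N.
      f r = (\<Sum>a\<in>mons d n. c a * (\<Prod>i<d. real (r i) ^ a i))}"

definition orth_polys :: "nat \<Rightarrow> (nat \<Rightarrow> real) \<Rightarrow> nat \<Rightarrow> nat \<Rightarrow> ((nat \<Rightarrow> nat) \<Rightarrow> real) set" where
  "orth_polys d \<alpha> N n = {f \<in> polys d N n. \<forall>m<n. \<forall>g\<in>polys d N m. ip d \<alpha> N f g = 0}"

definition is_onb :: "nat \<Rightarrow> (nat \<Rightarrow> real) \<Rightarrow> nat \<Rightarrow> nat \<Rightarrow> ((nat \<Rightarrow> nat) \<Rightarrow> real) list \<Rightarrow> bool" where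
  "is_onb d \<alpha> N n Ps \<longleftrightarrow>
     (\<forall>p\<in>set Ps. p \<in> orth_polys d \<alpha> N n) \<and>
     (\<forall>j<length Ps. \<forall>k<length Ps. ip d \<alpha> N (Ps!j) (Ps!k) = (if j = k then 1 else 0)) \<and>
     (\<forall>f\<in>orth_polys d \<alpha> N n. \<exists>c. \<forall>r\<in>simplex d N. f r = (\<Sum>k<length Ps. c k * (Ps!k) r))"

(* Hahn kernel H^alpha_n(r,s) = sum_k P_k(r) P_k(s) (independent of the chosen ONB) *)
definition hahn_kernel :: "nat \<Rightarrow> (nat \<Rightarrow> real) \<Rightarrow> nat \<Rightarrow> nat \<Rightarrow> (nat \<Rightarrow> nat) \<Rightarrow> (nat \<Rightarrow> nat) \<Rightarrow> real" where
  "hahn_kernel d \<alpha> N n r s =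
     (let Ps = (SOME Ps. is_onb d \<alpha> N n Ps) in (\<Sum>k<length Ps. (Ps!k) r * (Ps!k) s))"

definition HPDS :: "nat \<Rightarrow> (nat \<Rightarrow> real) \<Rightarrow> nat \<Rightarrow> (nat \<Rightarrow> real) \<Rightarrow> bool" where
  "HPDS d \<alpha> N \<rho> \<longleftrightarrow> \<rho> 0 = 1 \<and>
     (\<forall>r\<in>simplex d N. \<forall>s\<in>simplex d N. (\<Sum>n\<le>N. \<rho> n * hahn_kernel d \<alpha> N n r s) \<ge> 0)"

end

theory Submission
  imports Defs
begin

(*
  Both sequences are eigenvalue sequences of positive operators on functions on the simplex
  S N = N Delta_(d-1), built from the two transitions of the Polya urn: add_ball k (from
  functions on S (k+1) to functions on S k: add a ball of colour j with probability
  (alpha_j + l_j)/(|alpha| + k)) and drop_ball k (from S k to S (k+1): remove a uniformly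
  chosen ball).
  (1) Linear algebra in L^2(DM_alpha(.;j)): spans of functions on a simplex, Gram-Schmidt,
      orthonormal bases of the orthogonal polynomials (so the Hahn kernel is built from a
      genuine basis) and the expansion of every polynomial in these bases.
  (2) Every function on S N is a polynomial of degree <= N, so a positive operator acting on
      the degree-n orthogonal polynomials as multiplication by rho n, applied to a point mass,
      exhibits sum_n rho_n H_n(r,s) as a nonnegative number (hpds_criterion).
  (3) add_ball and drop_ball are adjoint, positive and triangular in the falling-factorial
      basis x_[c] = prod_i (x_i)_[c_i]; self-adjoint triangular operators act diagonally on
      the orthogonal polynomials.
  (4) redraw m t = drop t balls, then add them back, has the first sequence as eigenvalues on
      S (m+t); composing with overshoot N s (add s balls, then drop s) replaces N by N+s, and
      s -> infinity yields the second sequence, as HPDS is closed under termwise limits.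
*)

lemma simplex_subset_mons: "simplex d N \<subseteq> mons d N"
  unfolding simplex_def mons_def by auto

lemma finite_mons: "finite (mons d n)"
proof (rule finite_subset)
  have bound: "a i \<le> n" if "a \<in> mons d n" "i < d" for a i
  proof -
    have "a i \<le> (\<Sum>k<d. a k)" using that(2) by (intro member_le_sum) auto
    then show ?thesis using that(1) by (simp add: mons_def)
  qed
  show "mons d n \<subseteq> {a. \<forall>i. (i \<in> {..<d} \<longrightarrow> a i \<in> {..n}) \<and> (i \<notin> {..<d} \<longrightarrow> a i = 0)}"
    using bound by (auto simp: mons_def)
qed (rule finite_set_of_finite_funs; simp)

lemma finite_simplex: "finite (simplex d N)"
  using finite_subset[OF simplex_subset_mons finite_mons] .

lemma HPDS_cong:
  assumes "\<And>n. n \<le> N \<Longrightarrow> \<rho> n = \<rho>' n"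
  shows "HPDS d \<alpha> N \<rho> \<longleftrightarrow> HPDS d \<alpha> N \<rho>'"
proof -
  have "(\<Sum>n\<le>N. \<rho> n * H n) = (\<Sum>n\<le>N. \<rho>' n * H n)" for H :: "nat \<Rightarrow> real"
    using assms by (intro sum.cong) auto
  then show ?thesis unfolding HPDS_def using assms[of 0] by simp
qed

lemma HPDS_limit:
  assumes hpds: "\<And>s. HPDS d \<alpha> N (\<rho>s s)"
    and lim: "\<And>n. n \<le> N \<Longrightarrow> (\<lambda>s. \<rho>s s n) \<longlonglongrightarrow> \<rho> n" and \<rho>0: "\<rho> 0 = 1"
  shows "HPDS d \<alpha> N \<rho>"
  unfolding HPDS_def
proof (intro conjI \<rho>0 ballI)
  fix r s assume r: "r \<in> simplex d N" and s: "s \<in> simplex d N"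
  have "(\<lambda>t. \<Sum>n\<le>N. \<rho>s t n * hahn_kernel d \<alpha> N n r s) \<longlonglongrightarrow> (\<Sum>n\<le>N. \<rho> n * hahn_kernel d \<alpha> N n r s)"
    using lim by (intro tendsto_intros) auto
  moreover have "0 \<le> (\<Sum>n\<le>N. \<rho>s t n * hahn_kernel d \<alpha> N n r s)" for t
    using hpds[of t] r s unfolding HPDS_def by blast
  ultimately show "0 \<le> (\<Sum>n\<le>N. \<rho> n * hahn_kernel d \<alpha> N n r s)"
    by (intro LIMSEQ_le_const) auto
qed

lemma ratio_shift_tendsto:
  fixes c1 c2 :: real assumes c2: "0 < c2"
  shows "(\<lambda>s::nat. (c1 + real s) / (c2 + real s)) \<longlonglongrightarrow> 1"
proof -
  have "filterlim (\<lambda>s::nat. c2 + real s) at_infinity sequentially"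
    by (intro filterlim_at_top_imp_at_infinity filterlim_tendsto_add_at_top[OF tendsto_const]
        filterlim_real_sequentially)
  then have "(\<lambda>s::nat. 1 + (c1 - c2) / (c2 + real s)) \<longlonglongrightarrow> 1 + 0"
    by (intro tendsto_add tendsto_const tendsto_divide_0[OF tendsto_const])
  moreover have "1 + (c1 - c2) / (c2 + real s) = (c1 + real s) / (c2 + real s)" for s :: nat
    using c2 by (simp add: field_simps add_pos_nonneg)
  ultimately show ?thesis by simp
qed

lemma pochhammer_falling_ratio_tendsto:
  fixes x :: real assumes n: "n \<le> N"
  shows "(\<lambda>s. pochhammer (x + real (N + s)) n / falling (real (N + s)) n) \<longlonglongrightarrow> 1"
proof -
  have e: "pochhammer (x + real (N + s)) n / falling (real (N + s)) n
      = (\<Prod>i<n. ((x + real N + real i) + real s) / ((real N - real i) + real s))" for s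
    unfolding pochhammer_prod falling_def atLeast0LessThan prod_dividef[symmetric]
    by (intro prod.cong refl) (simp add: algebra_simps)
  have "(\<lambda>s. \<Prod>i<n. ((x + real N + real i) + real s) / ((real N - real i) + real s)) \<longlonglongrightarrow> (\<Prod>i<n. 1)"
    using n by (intro tendsto_prod ratio_shift_tendsto) auto
  then show ?thesis unfolding e by simp
qed

locale dirichlet_multinomial =
  fixes d :: nat and \<alpha> :: "nat \<Rightarrow> real"
  assumes d_pos: "0 < d" and alpha_pos: "\<And>i. i < d \<Longrightarrow> 0 < \<alpha> i"
begin

abbreviation S :: "nat \<Rightarrow> (nat \<Rightarrow> nat) set" where "S j \<equiv> simplex d j"
abbreviation A :: real where "A \<equiv> abs_alpha d \<alpha>"

lemma A_pos: "0 < A"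
  unfolding abs_alpha_def using d_pos alpha_pos by (intro sum_pos) auto

lemma pochhammer_A_pos: "0 < pochhammer (A + real k) n"
  using A_pos by (intro pochhammer_pos) simp

lemma DM_pos: assumes "r \<in> S j" shows "0 < DM d \<alpha> j r"
proof -
  have "0 < (\<Prod>i<d. pochhammer (\<alpha> i) (r i))"
    using alpha_pos by (intro prod_pos) (auto intro: pochhammer_pos)
  moreover have "0 < pochhammer A j" using A_pos by (rule pochhammer_pos)
  moreover have "0 < (\<Prod>i<d. fact (r i) :: real)" by (rule prod_pos) simp
  moreover have "0 < (fact j :: real)" by simp
  ultimately show ?thesis unfolding DM_def by simp
qed

section \<open>Linear algebra in L^2(DM_alpha(.;j))\<close>

lemma ip_sym: "ip d \<alpha> j f g = ip d \<alpha> j g f"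
  unfolding ip_def by (simp add: ac_simps)

lemma ip_cong: assumes "\<forall>r\<in>S j. f r = f' r" "\<forall>r\<in>S j. g r = g' r"
  shows "ip d \<alpha> j f g = ip d \<alpha> j f' g'"
  unfolding ip_def using assms by (intro sum.cong) auto

lemma ip_sum: "ip d \<alpha> j (\<lambda>r. \<Sum>x\<in>X. c x * f x r) g = (\<Sum>x\<in>X. c x * ip d \<alpha> j (f x) g)"
  unfolding ip_def
  by (simp add: sum_distrib_left sum_distrib_right sum.swap[of _ X] ac_simps)

lemma ip_lin: "ip d \<alpha> j (\<lambda>r. a * f r + b * g r) h = a * ip d \<alpha> j f h + b * ip d \<alpha> j g h"
  unfolding ip_def by (simp add: algebra_simps sum.distrib sum_distrib_left)

lemma ip_scale: "ip d \<alpha> j (\<lambda>r. a * f r) g = a * ip d \<alpha> j f g"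
  unfolding ip_def by (simp add: sum_distrib_left ac_simps)

lemma ip_self_terms_nonneg: "r \<in> S j \<Longrightarrow> 0 \<le> DM d \<alpha> j r * f r * f r"
  using DM_pos[of r j] by (simp add: mult.assoc)

lemma ip_nonneg: "0 \<le> ip d \<alpha> j f f"
  unfolding ip_def using ip_self_terms_nonneg by (intro sum_nonneg) auto

lemma ip_self_eq_0: assumes "ip d \<alpha> j f f = 0" shows "\<forall>r\<in>S j. f r = 0"
proof
  fix r assume r: "r \<in> S j"
  have "\<forall>x\<in>S j. DM d \<alpha> j x * f x * f x = 0"
    using assms sum_nonneg_eq_0_iff[OF finite_simplex, where f="\<lambda>x. DM d \<alpha> j x * f x * f x"]
      ip_self_terms_nonneg
    unfolding ip_def by blast
  then have "DM d \<alpha> j r * (f r * f r) = 0" using r by (simp add: mult.assoc)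
  then show "f r = 0" using DM_pos[OF r] by simp
qed

definition span_on :: "nat \<Rightarrow> ('a \<Rightarrow> (nat \<Rightarrow> nat) \<Rightarrow> real) \<Rightarrow> 'a set \<Rightarrow> ((nat \<Rightarrow> nat) \<Rightarrow> real) set" where
  "span_on j B M = {f. \<exists>c. \<forall>r\<in>S j. f r = (\<Sum>a\<in>M. c a * B a r)}"

lemma span_on_cong: "f \<in> span_on j B M \<Longrightarrow> \<forall>r\<in>S j. g r = f r \<Longrightarrow> g \<in> span_on j B M"
  unfolding span_on_def by auto

lemma span_on_cong_basis: "\<forall>a\<in>M. B a = B' a \<Longrightarrow> span_on j B M = span_on j B' M"
  unfolding span_on_def by (auto intro!: sum.cong)

lemma span_on_mem: assumes "finite M" "a \<in> M" shows "B a \<in> span_on j B M"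
proof -
  have "(\<Sum>b\<in>M. (if b = a then 1 else 0) * B b r) = (\<Sum>b\<in>M. if b = a then B b r else 0)" for r
    by (rule sum.cong) auto
  then have "\<forall>r\<in>S j. B a r = (\<Sum>b\<in>M. (if b = a then 1 else 0) * B b r)"
    using assms by (simp add: sum.delta')
  then show ?thesis
    unfolding span_on_def by (intro CollectI exI[of _ "\<lambda>b. if b = a then 1 else 0"])
qed

lemma span_on_zero: "(\<lambda>r. 0) \<in> span_on j B M"
  unfolding span_on_def by (intro CollectI exI[of _ "\<lambda>x. 0"]) simp

lemma span_on_empty: "f \<in> span_on j B {} \<Longrightarrow> \<forall>r\<in>S j. f r = 0"
  unfolding span_on_def by auto

lemma span_on_sum:
  assumes "finite X" "\<forall>x\<in>X. g x \<in> span_on j B M"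
  shows "(\<lambda>r. \<Sum>x\<in>X. c x * g x r) \<in> span_on j B M"
proof -
  from assms(2) obtain C where C: "\<forall>x\<in>X. \<forall>r\<in>S j. g x r = (\<Sum>a\<in>M. C x a * B a r)"
    unfolding span_on_def by (auto dest!: bchoice)
  have "\<forall>r\<in>S j. (\<Sum>x\<in>X. c x * g x r) = (\<Sum>a\<in>M. (\<Sum>x\<in>X. c x * C x a) * B a r)"
    using C by (auto simp: sum_distrib_left sum_distrib_right sum.swap[of _ X] ac_simps
        intro!: sum.cong)
  then show ?thesis unfolding span_on_def by (intro CollectI exI[of _ "\<lambda>a. \<Sum>x\<in>X. c x * C x a"])
qed

lemma span_on_lin:
  assumes "f \<in> span_on j B M" "g \<in> span_on j B M"
  shows "(\<lambda>r. a * f r + b * g r) \<in> span_on j B M"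
proof -
  have "(\<lambda>r. \<Sum>x\<in>{True, False}. (if x then a else b) * (if x then f else g) r) \<in> span_on j B M"
    using assms by (intro span_on_sum) auto
  then show ?thesis by simp
qed

lemma span_on_mono:
  assumes "M \<subseteq> M'" "finite M'" "f \<in> span_on j B M"
  shows "f \<in> span_on j B M'"
proof -
  from assms(3) obtain c where c: "\<forall>r\<in>S j. f r = (\<Sum>a\<in>M. c a * B a r)"
    unfolding span_on_def by auto
  have "(\<Sum>a\<in>M'. (if a \<in> M then c a else 0) * B a r) = (\<Sum>a\<in>M. c a * B a r)" for r
  proof -
    have "(\<Sum>a\<in>M'. (if a \<in> M then c a else 0) * B a r) = (\<Sum>a\<in>M'. if a \<in> M then c a * B a r else 0)"
      by (intro sum.cong) auto
    also have "\<dots> = (\<Sum>a\<in>M' \<inter> M. c a * B a r)" using assms(2) by (simp add: sum.inter_restrict)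
    also have "M' \<inter> M = M" using assms(1) by auto
    finally show ?thesis .
  qed
  then show ?thesis
    using c unfolding span_on_def by (intro CollectI exI[of _ "\<lambda>a. if a \<in> M then c a else 0"]) simp
qed

lemma span_on_trans:
  assumes "finite M" "\<forall>a\<in>M. B a \<in> span_on j B' M'" "f \<in> span_on j B M"
  shows "f \<in> span_on j B' M'"
proof -
  from assms(3) obtain c where c: "\<forall>r\<in>S j. f r = (\<Sum>a\<in>M. c a * B a r)"
    unfolding span_on_def by auto
  have "(\<lambda>r. \<Sum>a\<in>M. c a * B a r) \<in> span_on j B' M'" using assms by (intro span_on_sum) auto
  then show ?thesis using c span_on_cong by blast
qed

definition lin_closed :: "((nat \<Rightarrow> nat) \<Rightarrow> real) set \<Rightarrow> bool" where
  "lin_closed W \<longleftrightarrow> (\<lambda>r. 0) \<in> W \<and> (\<forall>f\<in>W. \<forall>g\<in>W. \<forall>a b. (\<lambda>r. a * f r + b * g r) \<in> W)"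

lemma lin_closedD: "lin_closed W \<Longrightarrow> f \<in> W \<Longrightarrow> g \<in> W \<Longrightarrow> (\<lambda>r. a * f r + b * g r) \<in> W"
  unfolding lin_closed_def by blast

lemma lin_closed_scale: "lin_closed W \<Longrightarrow> f \<in> W \<Longrightarrow> (\<lambda>r. a * f r) \<in> W"
  using lin_closedD[of W f f a 0] by simp

lemma lin_closed_sum:
  assumes "lin_closed W" "finite X" "\<forall>x\<in>X. g x \<in> W"
  shows "(\<lambda>r. \<Sum>x\<in>X. c x * g x r) \<in> W"
  using assms(2,3)
proof (induction X rule: finite_induct)
  case empty
  then show ?case using assms(1) unfolding lin_closed_def by simp
next
  case (insert x F)
  then have "(\<lambda>r. c x * g x r + 1 * (\<Sum>x\<in>F. c x * g x r)) \<in> W"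
    by (intro lin_closedD[OF assms(1)]) auto
  then show ?case using insert.hyps by simp
qed

lemma lin_closed_span_on: "lin_closed (span_on j B M)"
  unfolding lin_closed_def using span_on_zero span_on_lin by blast

abbreviation lspan :: "nat \<Rightarrow> ((nat \<Rightarrow> nat) \<Rightarrow> real) list \<Rightarrow> ((nat \<Rightarrow> nat) \<Rightarrow> real) set" where
  "lspan j B \<equiv> span_on j (\<lambda>k. B ! k) {..<length B}"

definition orthonormal :: "nat \<Rightarrow> ((nat \<Rightarrow> nat) \<Rightarrow> real) list \<Rightarrow> bool" where
  "orthonormal j B \<longleftrightarrow>
     (\<forall>k<length B. \<forall>l<length B. ip d \<alpha> j (B ! k) (B ! l) = (if k = l then 1 else 0))"

lemma lspan_append: assumes "f \<in> lspan j B" shows "f \<in> lspan j (B @ C)"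
proof -
  have "span_on j (\<lambda>k. B ! k) {..<length B} = span_on j (\<lambda>k. (B @ C) ! k) {..<length B}"
    by (rule span_on_cong_basis) (simp add: nth_append)
  then show ?thesis using assms span_on_mono[of "{..<length B}" "{..<length (B @ C)}"] by simp
qed

lemma lspan_snoc:
  assumes p: "p \<in> lspan j B" and l: "\<forall>r\<in>S j. l r = p r + c * u r"
  shows "l \<in> lspan j (B @ [u])"
proof -
  have "u \<in> lspan j (B @ [u])"
    using span_on_mem[of "{..<length (B @ [u])}" "length B" "\<lambda>k. (B @ [u]) ! k" j] by simp
  with lspan_append[OF p] have "(\<lambda>r. 1 * p r + c * u r) \<in> lspan j (B @ [u])"
    by (rule span_on_lin)
  then show ?thesis by (rule span_on_cong) (use l in simp)
qed

lemma onb_coeff: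
  assumes "orthonormal j B" "\<forall>r\<in>S j. f r = (\<Sum>k<length B. c k * (B ! k) r)" "l < length B"
  shows "ip d \<alpha> j f (B ! l) = c l"
proof -
  have "ip d \<alpha> j f (B ! l) = ip d \<alpha> j (\<lambda>r. \<Sum>k<length B. c k * (B ! k) r) (B ! l)"
    using assms(2) by (intro ip_cong) auto
  also have "\<dots> = (\<Sum>k<length B. c k * ip d \<alpha> j (B ! k) (B ! l))" by (rule ip_sum)
  also have "\<dots> = (\<Sum>k<length B. if k = l then c k else 0)"
    using assms(1,3) unfolding orthonormal_def by (intro sum.cong) auto
  also have "\<dots> = c l" using assms(3) by simp
  finally show ?thesis .
qed

lemma orth_lspan:
  assumes "g \<in> lspan j B" "\<forall>k<length B. ip d \<alpha> j f (B ! k) = 0"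
  shows "ip d \<alpha> j f g = 0"
proof -
  from assms(1) obtain c where c: "\<forall>r\<in>S j. g r = (\<Sum>k<length B. c k * (B ! k) r)"
    unfolding span_on_def by auto
  have "ip d \<alpha> j f g = ip d \<alpha> j (\<lambda>r. \<Sum>k<length B. c k * (B ! k) r) f"
    using c by (subst ip_sym) (intro ip_cong; auto)
  also have "\<dots> = (\<Sum>k<length B. c k * ip d \<alpha> j (B ! k) f)" by (rule ip_sum)
  also have "\<dots> = 0" using assms(2) by (simp add: ip_sym)
  finally show ?thesis .
qed

lemma orthonormal_snoc:
  assumes B: "orthonormal j B" and orth: "\<forall>k<length B. ip d \<alpha> j u (B ! k) = 0"
    and unit: "ip d \<alpha> j u u = 1"
  shows "orthonormal j (B @ [u])"
  unfolding orthonormal_def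
proof (intro allI impI)
  fix k l assume k: "k < length (B @ [u])" and l: "l < length (B @ [u])"
  show "ip d \<alpha> j ((B @ [u]) ! k) ((B @ [u]) ! l) = (if k = l then 1 else 0)"
  proof (cases "k < length B"; cases "l < length B")
    assume "k < length B" "l < length B"
    then show ?thesis using B by (simp add: orthonormal_def nth_append)
  next
    assume "k < length B" "\<not> l < length B"
    then have "l = length B" using l by simp
    then show ?thesis using orth \<open>k < length B\<close> by (simp add: nth_append ip_sym[of j _ u])
  next
    assume "\<not> k < length B" "l < length B"
    then have "k = length B" using k by simp
    then show ?thesis using orth \<open>l < length B\<close> by (simp add: nth_append)
  next
    assume "\<not> k < length B" "\<not> l < length B"
    then have "k = length B" "l = length B" using k l by simp_all
    then show ?thesis using unit by (simp add: nth_append)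
  qed
qed

lemma orthonormal_extend:
  assumes W: "lin_closed W" and B: "orthonormal j B" and vW: "v \<in> W"
    and v_orth: "\<forall>k<length B. ip d \<alpha> j v (B ! k) = 0" and v_nz: "ip d \<alpha> j v v \<noteq> 0"
  shows "\<exists>u\<in>W. orthonormal j (B @ [u]) \<and> (\<exists>c. \<forall>r. v r = c * u r)"
proof -
  define nv where "nv = sqrt (ip d \<alpha> j v v)"
  have nv: "0 < nv" "nv * nv = ip d \<alpha> j v v"
    unfolding nv_def using v_nz ip_nonneg[of j v] by auto
  define u where "u = (\<lambda>r. (1 / nv) * v r)"
  have "ip d \<alpha> j u u = (1 / nv) * ip d \<alpha> j v u" by (simp only: u_def ip_scale)
  also have "ip d \<alpha> j v u = ip d \<alpha> j u v" by (rule ip_sym)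
  also have "\<dots> = (1 / nv) * ip d \<alpha> j v v" by (simp only: u_def ip_scale)
  finally have "ip d \<alpha> j u u = 1" using nv v_nz by simp
  moreover have "\<forall>k<length B. ip d \<alpha> j u (B ! k) = 0"
    using v_orth by (simp only: u_def ip_scale) simp
  moreover have "\<forall>r. v r = nv * u r" unfolding u_def using nv(1) by simp
  ultimately show ?thesis
    using lin_closed_scale[OF W vW] orthonormal_snoc[OF B] unfolding u_def by blast
qed

lemma gram_schmidt_step:
  assumes W: "lin_closed W" and lW: "l \<in> W" and BW: "set B \<subseteq> W" and B: "orthonormal j B"
  shows "\<exists>B'. set B' \<subseteq> W \<and> orthonormal j B' \<and> lspan j B \<subseteq> lspan j B' \<and> l \<in> lspan j B'"
proof -
  define p where "p = (\<lambda>r. \<Sum>k<length B. ip d \<alpha> j l (B ! k) * (B ! k) r)"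
  define v where "v = (\<lambda>r. 1 * l r + (-1) * p r)"
  have pW: "p \<in> W" unfolding p_def using BW by (intro lin_closed_sum[OF W]) auto
  have vW: "v \<in> W" unfolding v_def by (rule lin_closedD[OF W lW pW])
  have p_span: "p \<in> lspan j B" unfolding p_def by (rule span_on_sum) (auto intro: span_on_mem)
  have v_orth: "\<forall>k<length B. ip d \<alpha> j v (B ! k) = 0"
  proof (intro allI impI)
    fix k assume k: "k < length B"
    have "ip d \<alpha> j p (B ! k) = ip d \<alpha> j l (B ! k)"
      unfolding p_def by (rule onb_coeff[OF B _ k]) simp
    then show "ip d \<alpha> j v (B ! k) = 0" unfolding v_def ip_lin by simp
  qed
  show ?thesis
  proof (cases "ip d \<alpha> j v v = 0")
    case True
    then have "\<forall>r\<in>S j. l r = p r" using ip_self_eq_0 unfolding v_def by fastforce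
    then have "l \<in> lspan j B" by (rule span_on_cong[OF p_span])
    then show ?thesis using BW B by blast
  next
    case False
    then obtain u c where uW: "u \<in> W" and B': "orthonormal j (B @ [u])" and vu: "\<forall>r. v r = c * u r"
      using orthonormal_extend[OF W B vW v_orth] by blast
    have "\<forall>r\<in>S j. l r = p r + c * u r" using vu unfolding v_def by (simp add: algebra_simps)
    then have "l \<in> lspan j (B @ [u])" by (rule lspan_snoc[OF p_span])
    moreover have "lspan j B \<subseteq> lspan j (B @ [u])" using lspan_append by blast
    moreover have "set (B @ [u]) \<subseteq> W" using BW uW by simp
    ultimately show ?thesis using B' by blast
  qed
qed

lemma gram_schmidt:
  assumes W: "lin_closed W" and "set L \<subseteq> W"
  shows "\<exists>B. set B \<subseteq> W \<and> orthonormal j B \<and> set L \<subseteq> lspan j B"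
  using assms(2)
proof (induction L)
  case Nil
  show ?case by (rule exI[of _ "[]"]) (simp add: orthonormal_def)
next
  case (Cons l L)
  then obtain B where "set B \<subseteq> W" "orthonormal j B" "set L \<subseteq> lspan j B" by auto
  with gram_schmidt_step[OF W, of l B j] Cons.prems show ?case by force
qed

section \<open>Polynomials and falling-factorial monomials\<close>

text \<open>Polynomials of degree <= n are spanned by the monomials x^a with |a| <= n, and equally
  by the falling-factorial monomials x_[a] = prod_i (x_i)_[a_i], which are better adapted to
  the urn operators.\<close>

definition mon :: "(nat \<Rightarrow> nat) \<Rightarrow> (nat \<Rightarrow> nat) \<Rightarrow> real" where
  "mon a r = (\<Prod>i<d. real (r i) ^ a i)"

definition fmon :: "(nat \<Rightarrow> nat) \<Rightarrow> (nat \<Rightarrow> nat) \<Rightarrow> real" where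
  "fmon a r = (\<Prod>i<d. falling (real (r i)) (a i))"

definition deg :: "(nat \<Rightarrow> nat) \<Rightarrow> nat" where
  "deg a = (\<Sum>i<d. a i)"

text \<open>Exponents of degree strictly less than n (so that polynomials of degree < 0 are 0).\<close>

definition exps_lt :: "nat \<Rightarrow> (nat \<Rightarrow> nat) set" where
  "exps_lt n = {a. (\<forall>i\<ge>d. a i = 0) \<and> deg a < n}"

lemma polys_mon: "polys d j n = span_on j mon (mons d n)"
  unfolding polys_def span_on_def mon_def ..

lemma exps_lt_Suc: "exps_lt (Suc n) = mons d n"
  unfolding exps_lt_def mons_def deg_def by auto

lemma exps_lt_0: "exps_lt 0 = {}"
  unfolding exps_lt_def by auto

lemma finite_exps_lt: "finite (exps_lt n)"
  by (cases n) (simp_all add: exps_lt_Suc exps_lt_0 finite_mons)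

lemma exps_lt_member: "(\<forall>i\<ge>d. c i = 0) \<Longrightarrow> deg c < n \<Longrightarrow> c \<in> exps_lt n"
  unfolding exps_lt_def by simp

lemma exps_lt_mono: "k \<le> n \<Longrightarrow> exps_lt k \<subseteq> exps_lt n"
  unfolding exps_lt_def by auto

lemma mons_mono: "n \<le> m \<Longrightarrow> mons d n \<subseteq> mons d m"
  unfolding mons_def by auto

lemma span_mons_Suc: "f \<in> span_on j B (mons d n) \<Longrightarrow> f \<in> span_on j B (mons d (Suc n))"
  using span_on_mono[OF mons_mono[of n "Suc n"] finite_mons] by simp

lemma falling_0 [simp]: "falling c 0 = 1"
  unfolding falling_def by simp

lemma falling_Suc: "falling c (Suc k) = falling c k * (c - real k)"
  unfolding falling_def by (simp add: prod.lessThan_Suc)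

lemma falling_Suc_left: "falling c (Suc k) = c * falling (c - 1) k"
  unfolding falling_def by (subst prod.lessThan_Suc_shift) (simp add: algebra_simps)

lemma falling_of_nat_eq_0: "m < k \<Longrightarrow> falling (real m) k = 0"
  unfolding falling_def by (rule prod_zero) auto

lemma falling_of_nat_pos: "n \<le> N \<Longrightarrow> 0 < falling (real N) n"
  unfolding falling_def by (rule prod_pos) auto

lemma falling_shift: "falling (c + 1) k = falling c k + real k * falling c (k - 1)"
proof (cases k)
  case (Suc k')
  then show ?thesis
    using falling_Suc_left[of "c + 1" k'] falling_Suc[of c k'] by (simp add: algebra_simps)
qed simp

lemma prod_upd: assumes "i < d"
  shows "(\<Prod>k<d. F k ((a(i := x)) k)) = F i x * (\<Prod>k\<in>{..<d} - {i}. F k (a k))"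
proof -
  have "(\<Prod>k<d. F k ((a(i := x)) k)) = F i ((a(i := x)) i) * (\<Prod>k\<in>{..<d} - {i}. F k ((a(i := x)) k))"
    by (rule prod.remove) (use assms in auto)
  also have "(\<Prod>k\<in>{..<d} - {i}. F k ((a(i := x)) k)) = (\<Prod>k\<in>{..<d} - {i}. F k (a k))"
    by (rule prod.cong) auto
  finally show ?thesis by simp
qed

lemma prod_split: "i < d \<Longrightarrow> (\<Prod>k<d. F k (a k)) = F i (a i) * (\<Prod>k\<in>{..<d} - {i}. F k (a k))"
  by (rule prod.remove) auto

lemma sum_upd: assumes "i < d"
  shows "(\<Sum>k<d. (a(i := x)) k) = x + (\<Sum>k\<in>{..<d} - {i}. a k)"
proof -
  have "(\<Sum>k<d. (a(i := x)) k) = (a(i := x)) i + (\<Sum>k\<in>{..<d} - {i}. (a(i := x)) k)"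
    by (rule sum.remove) (use assms in auto)
  also have "(\<Sum>k\<in>{..<d} - {i}. (a(i := x)) k) = (\<Sum>k\<in>{..<d} - {i}. a k)"
    by (rule sum.cong) auto
  finally show ?thesis by simp
qed

lemma sum_split: "i < d \<Longrightarrow> (\<Sum>k<d. a k) = a i + (\<Sum>k\<in>{..<d} - {i}. a k)"
  by (rule sum.remove) auto

lemma deg_raise: "i < d \<Longrightarrow> deg (a(i := Suc (a i))) = Suc (deg a)"
  unfolding deg_def using sum_upd[of i a "Suc (a i)"] sum_split[of i a] by simp

lemma deg_lower: "i < d \<Longrightarrow> 0 < a i \<Longrightarrow> Suc (deg (a(i := a i - 1))) = deg a"
  unfolding deg_def using sum_upd[of i a "a i - 1"] sum_split[of i a] by simp

lemma mons_raise: "a \<in> mons d n \<Longrightarrow> i < d \<Longrightarrow> a(i := Suc (a i)) \<in> mons d (Suc n)"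
  using deg_raise[of i a] unfolding mons_def deg_def by auto

lemma mons_lower:
  assumes a: "a \<in> mons d (Suc n)" and na: "a \<notin> mons d n"
  obtains i b where "i < d" "b \<in> mons d n" "a = b(i := Suc (b i))"
proof -
  have deg: "deg a = Suc n" using a na unfolding mons_def deg_def by auto
  then obtain i where i: "i < d" "0 < a i"
    unfolding deg_def by (metis Suc_neq_Zero lessThan_iff neq0_conv sum.neutral)
  have "a(i := a i - 1) \<in> mons d n"
    using a deg deg_lower[of i a] i unfolding mons_def deg_def by auto
  moreover have "a = (a(i := a i - 1))(i := Suc ((a(i := a i - 1)) i))" using i(2) by auto
  ultimately show ?thesis using that i(1) by blast
qed

definition ladder_basis :: "((nat \<Rightarrow> nat) \<Rightarrow> (nat \<Rightarrow> nat) \<Rightarrow> real) \<Rightarrow> (nat \<Rightarrow> (nat \<Rightarrow> nat) \<Rightarrow> real) \<Rightarrow> bool" where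
  "ladder_basis B \<kappa> \<longleftrightarrow> (\<forall>a. (\<forall>i<d. a i = 0) \<longrightarrow> B a = (\<lambda>r. 1)) \<and>
     (\<forall>i<d. \<forall>b r. B (b(i := Suc (b i))) r = (real (r i) - \<kappa> i b) * B b r)"

lemma fmon_raise:
  assumes "i < d" shows "fmon (b(i := Suc (b i))) r = (real (r i) - real (b i)) * fmon b r"
  using prod_upd[OF assms, of "\<lambda>k e. falling (real (r k)) e" b]
    prod_split[OF assms, of "\<lambda>k e. falling (real (r k)) e" b]
  unfolding fmon_def by (simp add: falling_Suc)

lemma mon_raise:
  assumes "i < d" shows "mon (b(i := Suc (b i))) r = real (r i) * mon b r"
  using prod_upd[OF assms, of "\<lambda>k e. real (r k) ^ e" b]
    prod_split[OF assms, of "\<lambda>k e. real (r k) ^ e" b]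
  unfolding mon_def by simp

lemma ladder_mon: "ladder_basis mon (\<lambda>i b. 0)"
  unfolding ladder_basis_def
proof (intro conjI allI impI)
  fix a :: "nat \<Rightarrow> nat" assume "\<forall>i<d. a i = 0"
  then show "mon a = (\<lambda>r. 1)" unfolding mon_def by (auto intro!: prod.neutral)
qed (simp add: mon_raise)

lemma ladder_fmon: "ladder_basis fmon (\<lambda>i b. real (b i))"
  unfolding ladder_basis_def
proof (intro conjI allI impI)
  fix a :: "nat \<Rightarrow> nat" assume "\<forall>i<d. a i = 0"
  then show "fmon a = (\<lambda>r. 1)" unfolding fmon_def by (auto intro!: prod.neutral)
qed (simp add: fmon_raise)

lemma ladder_raise:
  "ladder_basis B \<kappa> \<Longrightarrow> i < d \<Longrightarrow> B (b(i := Suc (b i))) r = (real (r i) - \<kappa> i b) * B b r"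
  unfolding ladder_basis_def by blast

lemma ladder_coord_mult:
  assumes B: "ladder_basis B \<kappa>" and i: "i < d" and f: "f \<in> span_on j B (mons d n)"
  shows "(\<lambda>r. real (r i) * f r) \<in> span_on j B (mons d (Suc n))"
proof -
  have step: "(\<lambda>r. real (r i) * B a r) \<in> span_on j B (mons d (Suc n))" if a: "a \<in> mons d n" for a
  proof -
    have "B (a(i := Suc (a i))) \<in> span_on j B (mons d (Suc n))"
      using mons_raise[OF a i] by (simp add: span_on_mem finite_mons)
    moreover have "B a \<in> span_on j B (mons d (Suc n))"
      using a by (intro span_mons_Suc span_on_mem finite_mons)
    ultimately have "(\<lambda>r. 1 * B (a(i := Suc (a i))) r + \<kappa> i a * B a r) \<in> span_on j B (mons d (Suc n))"
      by (rule span_on_lin)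
    moreover have "real (r i) * B a r = 1 * B (a(i := Suc (a i))) r + \<kappa> i a * B a r" for r
      using ladder_raise[OF B i, of a r] by (simp add: algebra_simps)
    ultimately show ?thesis by simp
  qed
  from f obtain c where c: "\<forall>r\<in>S j. f r = (\<Sum>a\<in>mons d n. c a * B a r)"
    unfolding span_on_def by auto
  have "(\<lambda>r. \<Sum>a\<in>mons d n. c a * (real (r i) * B a r)) \<in> span_on j B (mons d (Suc n))"
    using step by (intro span_on_sum[where g="\<lambda>a r. real (r i) * B a r"]) (auto simp: finite_mons)
  then show ?thesis by (rule span_on_cong) (use c in \<open>simp add: sum_distrib_left ac_simps\<close>)
qed

lemma ladder_in_span:
  assumes B: "ladder_basis B \<kappa>" and B': "ladder_basis B' \<kappa>'"
  shows "a \<in> mons d n \<Longrightarrow> B a \<in> span_on j B' (mons d n)"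
proof (induction n arbitrary: a)
  case 0
  then have "\<forall>i<d. a i = 0" unfolding mons_def by simp
  then have "B a = B' a" using B B' unfolding ladder_basis_def by simp
  then show ?case using 0 by (simp add: span_on_mem finite_mons)
next
  case (Suc n)
  show ?case
  proof (cases "a \<in> mons d n")
    case True
    then show ?thesis using Suc.IH span_mons_Suc by blast
  next
    case False
    then obtain i b where i: "i < d" and b: "b \<in> mons d n" and ab: "a = b(i := Suc (b i))"
      using mons_lower[OF Suc.prems] by blast
    have "(\<lambda>r. real (r i) * B b r) \<in> span_on j B' (mons d (Suc n))"
      by (rule ladder_coord_mult[OF B' i Suc.IH[OF b]])
    moreover have "B b \<in> span_on j B' (mons d (Suc n))"
      using Suc.IH[OF b] by (rule span_mons_Suc)
    ultimately have "(\<lambda>r. 1 * (real (r i) * B b r) + (- \<kappa> i b) * B b r) \<in> span_on j B' (mons d (Suc n))"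
      by (rule span_on_lin)
    moreover have "B a r = 1 * (real (r i) * B b r) + (- \<kappa> i b) * B b r" for r
      using ladder_raise[OF B i, of b r] unfolding ab by (simp add: algebra_simps)
    ultimately show ?thesis by simp
  qed
qed

lemma polys_fmon: "polys d j n = span_on j fmon (mons d n)"
proof
  show "polys d j n \<subseteq> span_on j fmon (mons d n)"
    unfolding polys_mon using ladder_in_span[OF ladder_mon ladder_fmon] span_on_trans[OF finite_mons]
    by blast
  show "span_on j fmon (mons d n) \<subseteq> polys d j n"
    unfolding polys_mon using ladder_in_span[OF ladder_fmon ladder_mon] span_on_trans[OF finite_mons]
    by blast
qed

lemma polys_exps_lt: "polys d j n = span_on j fmon (exps_lt (Suc n))"
  by (simp add: polys_fmon exps_lt_Suc)

lemma lin_closed_polys: "lin_closed (polys d j n)"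
  unfolding polys_mon by (rule lin_closed_span_on)

lemma polys_mono: "m \<le> n \<Longrightarrow> f \<in> polys d j m \<Longrightarrow> f \<in> polys d j n"
  unfolding polys_mon using span_on_mono[OF mons_mono finite_mons] by blast

text \<open>On S N the falling monomials with exponents in S N are point masses (up to a positive
  factor), so every function on S N is a polynomial of degree at most N.\<close>

lemma fmon_diag_pos: "0 < fmon r r"
  unfolding fmon_def falling_def by (intro prod_pos) auto

lemma fmon_off_diag:
  assumes a: "a \<in> S N" and r: "r \<in> S N" and ne: "a \<noteq> r"
  shows "fmon a r = 0"
proof -
  have "\<exists>i<d. r i < a i"
  proof (rule ccontr)
    assume "\<not> (\<exists>i<d. r i < a i)"
    then have le: "\<forall>i<d. a i \<le> r i" by auto
    have "\<forall>i<d. a i = r i"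
    proof (rule ccontr)
      assume "\<not> (\<forall>i<d. a i = r i)"
      then obtain i where "i < d" "a i < r i" using le by (meson le_neq_implies_less)
      then have "(\<Sum>i<d. a i) < (\<Sum>i<d. r i)" using le by (intro sum_strict_mono_ex1) auto
      then show False using a r unfolding simplex_def by simp
    qed
    moreover have "\<forall>i\<ge>d. a i = r i" using a r unfolding simplex_def by simp
    ultimately have "a = r" by (metis not_le ext)
    then show False using ne by simp
  qed
  then obtain i where i: "i < d" "r i < a i" by blast
  show ?thesis unfolding fmon_def by (rule prod_zero) (use i falling_of_nat_eq_0 in auto)
qed

lemma all_functions_polys: "f \<in> polys d N N"
proof -
  define c where "c a = (if a \<in> S N then f a / fmon a a else 0)" for a
  have "\<forall>r\<in>S N. f r = (\<Sum>a\<in>mons d N. c a * fmon a r)"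
  proof
    fix r assume r: "r \<in> S N"
    have "(\<Sum>a\<in>mons d N. c a * fmon a r) = (\<Sum>a\<in>mons d N. if a = r then f r else 0)"
      using r fmon_off_diag[of _ N r] fmon_diag_pos[of r] unfolding c_def by (intro sum.cong) auto
    also have "\<dots> = f r" using r simplex_subset_mons finite_mons by (auto simp: sum.delta')
    finally show "f r = (\<Sum>a\<in>mons d N. c a * fmon a r)" by simp
  qed
  then show ?thesis unfolding polys_fmon span_on_def by blast
qed

section \<open>Orthonormal bases and the Hahn kernel\<close>

text \<open>Orthonormal bases of the spaces of orthogonal polynomials exist, so the Hahn kernel is
  computed from a genuine orthonormal basis.\<close>

lemma orth_polys_polys: "f \<in> orth_polys d \<alpha> j n \<Longrightarrow> f \<in> polys d j n"
  unfolding orth_polys_def by simp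

lemma lin_closed_orth_polys: "lin_closed (orth_polys d \<alpha> j n)"
  unfolding lin_closed_def
proof (intro conjI ballI allI)
  show "(\<lambda>r. 0) \<in> orth_polys d \<alpha> j n"
    unfolding orth_polys_def polys_mon using span_on_zero by (simp add: ip_def)
next
  fix f g a b assume f: "f \<in> orth_polys d \<alpha> j n" and g: "g \<in> orth_polys d \<alpha> j n"
  then have "(\<lambda>r. a * f r + b * g r) \<in> polys d j n"
    unfolding orth_polys_def using lin_closedD[OF lin_closed_polys] by blast
  then show "(\<lambda>r. a * f r + b * g r) \<in> orth_polys d \<alpha> j n"
    using f g unfolding orth_polys_def by (simp add: ip_lin)
qed

lemma lower_onb:
  "\<exists>B. orthonormal j B \<and> set B \<subseteq> polys d j n \<and> (\<forall>m<n. polys d j m \<subseteq> lspan j B)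
     \<and> (\<forall>f\<in>orth_polys d \<alpha> j n. \<forall>k<length B. ip d \<alpha> j f (B ! k) = 0)"
proof (cases n)
  case 0
  then show ?thesis by (intro exI[of _ "[]"]) (simp add: orthonormal_def)
next
  case (Suc k)
  obtain xs where xs: "set xs = mons d k" using finite_list[OF finite_mons] by blast
  have "set (map mon xs) \<subseteq> polys d j k"
    using xs unfolding polys_mon by (auto intro: span_on_mem finite_mons)
  from gram_schmidt[OF lin_closed_polys this] obtain B where
    B: "set B \<subseteq> polys d j k" "orthonormal j B" "set (map mon xs) \<subseteq> lspan j B" by blast
  have "polys d j k \<subseteq> lspan j B"
  proof
    fix f assume "f \<in> polys d j k"
    moreover have "\<forall>a\<in>mons d k. mon a \<in> lspan j B" using B(3) xs by auto
    ultimately show "f \<in> lspan j B" unfolding polys_mon using span_on_trans[OF finite_mons] by blast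
  qed
  then have "\<forall>m<n. polys d j m \<subseteq> lspan j B" using Suc polys_mono by (auto simp: less_Suc_eq_le)
  moreover have "set B \<subseteq> polys d j n" using B(1) Suc polys_mono[of k n] by auto
  moreover have "\<forall>f\<in>orth_polys d \<alpha> j n. \<forall>l<length B. ip d \<alpha> j f (B ! l) = 0"
    using B(1) Suc unfolding orth_polys_def by (auto simp: subset_iff)
  ultimately show ?thesis using B(2) by blast
qed

definition orth_part :: "nat \<Rightarrow> ((nat \<Rightarrow> nat) \<Rightarrow> real) list \<Rightarrow> ((nat \<Rightarrow> nat) \<Rightarrow> real) \<Rightarrow> (nat \<Rightarrow> nat) \<Rightarrow> real" where
  "orth_part j B g = (\<lambda>r. g r - (\<Sum>k<length B. ip d \<alpha> j g (B ! k) * (B ! k) r))"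

lemma orth_part_lin:
  "orth_part j B g = (\<lambda>r. 1 * g r + (-1) * (\<Sum>k<length B. ip d \<alpha> j g (B ! k) * (B ! k) r))"
  unfolding orth_part_def by simp

lemma orth_part_orth:
  assumes "orthonormal j B" "k < length B"
  shows "ip d \<alpha> j (orth_part j B g) (B ! k) = 0"
proof -
  have "ip d \<alpha> j (\<lambda>r. \<Sum>l<length B. ip d \<alpha> j g (B ! l) * (B ! l) r) (B ! k) = ip d \<alpha> j g (B ! k)"
    by (rule onb_coeff[OF assms(1) _ assms(2)]) simp
  then show ?thesis unfolding orth_part_lin ip_lin by simp
qed

lemma orth_part_sum:
  "orth_part j B (\<lambda>r. \<Sum>a\<in>M. c a * g a r) r = (\<Sum>a\<in>M. c a * orth_part j B (g a) r)"
proof -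
  have "(\<Sum>k<length B. ip d \<alpha> j (\<lambda>r. \<Sum>a\<in>M. c a * g a r) (B ! k) * (B ! k) r)
      = (\<Sum>a\<in>M. c a * (\<Sum>k<length B. ip d \<alpha> j (g a) (B ! k) * (B ! k) r))"
    unfolding ip_sum by (simp add: sum_distrib_left sum_distrib_right sum.swap[of _ M] mult.assoc)
  then show ?thesis unfolding orth_part_def by (simp add: right_diff_distrib sum_subtractf)
qed

lemma orth_part_cong:
  assumes "\<forall>x\<in>S j. g x = g' x" "r \<in> S j"
  shows "orth_part j B g r = orth_part j B g' r"
proof -
  have "ip d \<alpha> j g (B ! k) = ip d \<alpha> j g' (B ! k)" for k using assms(1) by (intro ip_cong) auto
  then show ?thesis unfolding orth_part_def using assms by simp
qed

lemma orth_part_id: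
  "\<forall>k<length B. ip d \<alpha> j g (B ! k) = 0 \<Longrightarrow> orth_part j B g = g"
  unfolding orth_part_def by simp

lemma span_orth_part_mon:
  assumes f: "f \<in> polys d j n" and f_orth: "\<forall>k<length B. ip d \<alpha> j f (B ! k) = 0"
  shows "f \<in> span_on j (\<lambda>a. orth_part j B (mon a)) (mons d n)"
proof -
  from f obtain c where c: "\<forall>r\<in>S j. f r = (\<Sum>a\<in>mons d n. c a * mon a r)"
    unfolding polys_mon span_on_def by auto
  have "f r = (\<Sum>a\<in>mons d n. c a * orth_part j B (mon a) r)" if r: "r \<in> S j" for r
  proof -
    have "f r = orth_part j B f r" using orth_part_id[OF f_orth] by simp
    also have "\<dots> = orth_part j B (\<lambda>r. \<Sum>a\<in>mons d n. c a * mon a r) r"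
      using c r by (rule orth_part_cong)
    finally show ?thesis unfolding orth_part_sum .
  qed
  then show ?thesis unfolding span_on_def by blast
qed

text \<open>Orthonormal bases exist: orthogonalise the monomials of degree n against an orthonormal
  basis of the lower degrees, then apply Gram-Schmidt inside orth_polys.\<close>

lemma onb_exists: "\<exists>Ps. is_onb d \<alpha> j n Ps"
proof -
  obtain B where B: "orthonormal j B" and B_polys: "set B \<subseteq> polys d j n"
    and B_lower: "\<forall>m<n. polys d j m \<subseteq> lspan j B"
    and B_orth: "\<forall>f\<in>orth_polys d \<alpha> j n. \<forall>k<length B. ip d \<alpha> j f (B ! k) = 0"
    using lower_onb by blast
  define v where "v a = orth_part j B (mon a)" for a
  have v_orth_polys: "v a \<in> orth_polys d \<alpha> j n" if a: "a \<in> mons d n" for a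
  proof -
    have "mon a \<in> polys d j n" using a unfolding polys_mon by (simp add: span_on_mem finite_mons)
    moreover have "(\<lambda>r. \<Sum>k<length B. ip d \<alpha> j (mon a) (B ! k) * (B ! k) r) \<in> polys d j n"
      using B_polys by (intro lin_closed_sum[OF lin_closed_polys]) auto
    ultimately have "v a \<in> polys d j n"
      unfolding v_def orth_part_lin by (rule lin_closedD[OF lin_closed_polys])
    moreover have "\<forall>m<n. \<forall>g\<in>polys d j m. ip d \<alpha> j (v a) g = 0"
      using B_lower orth_part_orth[OF B] orth_lspan unfolding v_def by blast
    ultimately show ?thesis unfolding orth_polys_def by simp
  qed
  obtain xs where xs: "set xs = mons d n" using finite_list[OF finite_mons] by blast
  have "set (map v xs) \<subseteq> orth_polys d \<alpha> j n" using xs v_orth_polys by auto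
  from gram_schmidt[OF lin_closed_orth_polys this] obtain Ps where
    Ps: "set Ps \<subseteq> orth_polys d \<alpha> j n" "orthonormal j Ps" "set (map v xs) \<subseteq> lspan j Ps" by blast
  have "f \<in> lspan j Ps" if f: "f \<in> orth_polys d \<alpha> j n" for f
  proof -
    have "f \<in> span_on j v (mons d n)"
      unfolding v_def using f B_orth orth_polys_polys by (intro span_orth_part_mon) auto
    moreover have "\<forall>a\<in>mons d n. v a \<in> lspan j Ps" using Ps(3) xs by auto
    ultimately show ?thesis using span_on_trans[OF finite_mons] by blast
  qed
  then have "is_onb d \<alpha> j n Ps"
    unfolding is_onb_def using Ps(1,2) unfolding orthonormal_def span_on_def by blast
  then show ?thesis by blast
qed

definition onb :: "nat \<Rightarrow> nat \<Rightarrow> ((nat \<Rightarrow> nat) \<Rightarrow> real) list" where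
  "onb j n = (SOME Ps. is_onb d \<alpha> j n Ps)"

definition onb_vec :: "nat \<Rightarrow> nat \<times> nat \<Rightarrow> (nat \<Rightarrow> nat) \<Rightarrow> real" where
  "onb_vec j x = onb j (fst x) ! snd x"

definition onb_idx :: "nat \<Rightarrow> nat \<Rightarrow> (nat \<times> nat) set" where
  "onb_idx j n = (SIGMA m:{..<n}. {..<length (onb j m)})"

lemma onb_is_onb: "is_onb d \<alpha> j n (onb j n)"
  unfolding onb_def using onb_exists by (rule someI_ex)

lemma hahn_kernel_onb:
  "hahn_kernel d \<alpha> N n r s = (\<Sum>k<length (onb N n). (onb N n ! k) r * (onb N n ! k) s)"
  unfolding hahn_kernel_def onb_def Let_def ..

lemma onb_orthonormal: "orthonormal j (onb j n)"
  using onb_is_onb[of j n] unfolding is_onb_def orthonormal_def by auto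

lemma onb_expansion:
  assumes "f \<in> orth_polys d \<alpha> j n"
  shows "\<forall>r\<in>S j. f r = (\<Sum>k<length (onb j n). ip d \<alpha> j f (onb j n ! k) * (onb j n ! k) r)"
proof -
  obtain c where c: "\<forall>r\<in>S j. f r = (\<Sum>k<length (onb j n). c k * (onb j n ! k) r)"
    using onb_is_onb[of j n] assms unfolding is_onb_def by blast
  then have "\<forall>k<length (onb j n). c k = ip d \<alpha> j f (onb j n ! k)"
    using onb_coeff[OF onb_orthonormal c] by simp
  then show ?thesis using c by simp
qed

lemma finite_onb_idx: "finite (onb_idx j n)"
  unfolding onb_idx_def by (intro finite_SigmaI) auto

lemma onb_idx_iff: "x \<in> onb_idx j n \<longleftrightarrow> fst x < n \<and> snd x < length (onb j (fst x))"
  unfolding onb_idx_def by (cases x) auto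

lemma onb_vec_orth_polys:
  "snd x < length (onb j (fst x)) \<Longrightarrow> onb_vec j x \<in> orth_polys d \<alpha> j (fst x)"
  using onb_is_onb[of j "fst x"] unfolding is_onb_def onb_vec_def by auto

lemma onb_vec_polys:
  "snd x < length (onb j (fst x)) \<Longrightarrow> fst x \<le> n \<Longrightarrow> onb_vec j x \<in> polys d j n"
  using onb_vec_orth_polys orth_polys_polys polys_mono by blast

lemma onb_vec_orthonormal:
  assumes x: "snd x < length (onb j (fst x))" and y: "snd y < length (onb j (fst y))"
  shows "ip d \<alpha> j (onb_vec j x) (onb_vec j y) = (if x = y then 1 else 0)"
proof (cases "fst x = fst y")
  case True
  then show ?thesis using onb_orthonormal[of j "fst x"] x y unfolding orthonormal_def onb_vec_def
    by (auto simp: prod_eq_iff)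
next
  case False
  have lower_orth: "ip d \<alpha> j (onb_vec j a) (onb_vec j b) = 0"
    if a: "snd a < length (onb j (fst a))" and b: "snd b < length (onb j (fst b))"
      and lt: "fst b < fst a" for a b
    using onb_vec_orth_polys[OF a] onb_vec_polys[OF b order.refl] lt
    unfolding orth_polys_def by auto
  have "ip d \<alpha> j (onb_vec j x) (onb_vec j y) = 0"
    using lower_orth[OF x y] lower_orth[OF y x] False ip_sym[of j "onb_vec j x"]
    by (cases "fst x < fst y") auto
  then show ?thesis using False by auto
qed

lemma sum_onb_idx_delta:
  assumes "snd y < length (onb j (fst y))"
  shows "(\<Sum>x\<in>onb_idx j n. a x * ip d \<alpha> j (onb_vec j x) (onb_vec j y)) = (if fst y < n then a y else 0)"
proof -
  have "(\<Sum>x\<in>onb_idx j n. a x * ip d \<alpha> j (onb_vec j x) (onb_vec j y))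
      = (\<Sum>x\<in>onb_idx j n. if x = y then a x else 0)"
    using assms by (intro sum.cong) (auto simp: onb_vec_orthonormal onb_idx_iff)
  also have "\<dots> = (if fst y < n then a y else 0)"
    using finite_onb_idx assms by (simp add: onb_idx_iff)
  finally show ?thesis .
qed

lemma sum_onb_idx_Suc:
  "(\<Sum>x\<in>onb_idx j (Suc n). F x) = (\<Sum>x\<in>onb_idx j n. F x) + (\<Sum>k<length (onb j n). F (n, k))"
proof -
  have split: "onb_idx j (Suc n) = onb_idx j n \<union> Pair n ` {..<length (onb j n)}"
    unfolding onb_idx_def by (auto simp: less_Suc_eq)
  have "onb_idx j n \<inter> Pair n ` {..<length (onb j n)} = {}"
    unfolding onb_idx_def by auto
  then have "(\<Sum>x\<in>onb_idx j (Suc n). F x)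
      = (\<Sum>x\<in>onb_idx j n. F x) + (\<Sum>x\<in>Pair n ` {..<length (onb j n)}. F x)"
    unfolding split using finite_onb_idx by (intro sum.union_disjoint) auto
  also have "(\<Sum>x\<in>Pair n ` {..<length (onb j n)}. F x) = (\<Sum>k<length (onb j n). F (n, k))"
    by (subst sum.reindex) (auto simp: inj_on_def)
  finally show ?thesis .
qed

lemma expansion_residual_orth:
  assumes lower: "\<forall>m<n. \<forall>h\<in>polys d j m. \<forall>r\<in>S j.
                    h r = (\<Sum>x\<in>onb_idx j n. ip d \<alpha> j h (onb_vec j x) * onb_vec j x r)"
    and f: "f \<in> polys d j n"
  defines "g \<equiv> (\<lambda>r. 1 * f r + (-1) * (\<Sum>x\<in>onb_idx j n. ip d \<alpha> j f (onb_vec j x) * onb_vec j x r))"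
  shows "g \<in> orth_polys d \<alpha> j n"
    and "\<And>y. snd y < length (onb j (fst y)) \<Longrightarrow>
           ip d \<alpha> j g (onb_vec j y) = (if fst y < n then 0 else ip d \<alpha> j f (onb_vec j y))"
proof -
  show coeff: "ip d \<alpha> j g (onb_vec j y) = (if fst y < n then 0 else ip d \<alpha> j f (onb_vec j y))"
    if y: "snd y < length (onb j (fst y))" for y
    unfolding g_def ip_lin ip_sum sum_onb_idx_delta[OF y] by simp
  have "(\<lambda>r. \<Sum>x\<in>onb_idx j n. ip d \<alpha> j f (onb_vec j x) * onb_vec j x r) \<in> polys d j n"
    using onb_vec_polys by (intro lin_closed_sum[OF lin_closed_polys finite_onb_idx])
      (auto simp: onb_idx_iff less_imp_le)
  then have "g \<in> polys d j n" unfolding g_def by (rule lin_closedD[OF lin_closed_polys f])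
  moreover have "ip d \<alpha> j g h = 0" if m: "m < n" and h: "h \<in> polys d j m" for m h
  proof -
    have "ip d \<alpha> j g h
        = ip d \<alpha> j (\<lambda>r. \<Sum>x\<in>onb_idx j n. ip d \<alpha> j h (onb_vec j x) * onb_vec j x r) g"
      using lower m h by (subst ip_sym) (intro ip_cong; auto)
    also have "\<dots> = (\<Sum>x\<in>onb_idx j n. ip d \<alpha> j h (onb_vec j x) * ip d \<alpha> j g (onb_vec j x))"
      unfolding ip_sum by (simp add: ip_sym[of j _ g])
    also have "\<dots> = 0" using coeff by (intro sum.neutral) (auto simp: onb_idx_iff)
    finally show ?thesis .
  qed
  ultimately show "g \<in> orth_polys d \<alpha> j n" unfolding orth_polys_def by blast
qed

lemma polys_expansion:
  "f \<in> polys d j n \<Longrightarrow> \<forall>r\<in>S j. f r = (\<Sum>x\<in>onb_idx j (Suc n). ip d \<alpha> j f (onb_vec j x) * onb_vec j x r)"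
proof (induction n arbitrary: f rule: less_induct)
  case (less n)
  define E where "E = (\<lambda>r. \<Sum>x\<in>onb_idx j n. ip d \<alpha> j f (onb_vec j x) * onb_vec j x r)"
  define g where "g = (\<lambda>r. 1 * f r + (-1) * E r)"
  have lower: "\<forall>m<n. \<forall>h\<in>polys d j m. \<forall>r\<in>S j.
                 h r = (\<Sum>x\<in>onb_idx j n. ip d \<alpha> j h (onb_vec j x) * onb_vec j x r)"
  proof (intro allI impI ballI)
    fix m h r assume "m < n" "h \<in> polys d j m" "r \<in> S j"
    then obtain n' where "n = Suc n'" "h \<in> polys d j n'"
      using polys_mono by (metis less_Suc_eq_le lessE)
    then show "h r = (\<Sum>x\<in>onb_idx j n. ip d \<alpha> j h (onb_vec j x) * onb_vec j x r)"
      using less.IH[of n' h] \<open>r \<in> S j\<close> by simp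
  qed
  have g: "g \<in> orth_polys d \<alpha> j n"
    and g_coeff: "\<And>k. k < length (onb j n) \<Longrightarrow> ip d \<alpha> j g (onb_vec j (n, k)) = ip d \<alpha> j f (onb_vec j (n, k))"
    using expansion_residual_orth[OF lower less.prems] unfolding g_def E_def by auto
  show ?case
  proof
    fix r assume r: "r \<in> S j"
    have "g r = (\<Sum>k<length (onb j n). ip d \<alpha> j g (onb j n ! k) * (onb j n ! k) r)"
      using onb_expansion[OF g] r by blast
    also have "\<dots> = (\<Sum>k<length (onb j n). ip d \<alpha> j f (onb_vec j (n, k)) * onb_vec j (n, k) r)"
      using g_coeff by (intro sum.cong) (auto simp: onb_vec_def)
    finally have "f r - E r = (\<Sum>k<length (onb j n). ip d \<alpha> j f (onb_vec j (n, k)) * onb_vec j (n, k) r)"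
      unfolding g_def by simp
    then show "f r = (\<Sum>x\<in>onb_idx j (Suc n). ip d \<alpha> j f (onb_vec j x) * onb_vec j x r)"
      unfolding sum_onb_idx_Suc E_def by simp
  qed
qed

section \<open>Positive operators and the HPDS criterion\<close>

definition lin_op :: "nat \<Rightarrow> nat \<Rightarrow> (((nat \<Rightarrow> nat) \<Rightarrow> real) \<Rightarrow> ((nat \<Rightarrow> nat) \<Rightarrow> real)) \<Rightarrow> bool" where
  "lin_op a b T \<longleftrightarrow> (\<forall>f g. (\<forall>r\<in>S a. f r = g r) \<longrightarrow> (\<forall>r\<in>S b. T f r = T g r)) \<and>
     (\<forall>f g. \<forall>r\<in>S b. T (\<lambda>x. f x + g x) r = T f r + T g r) \<and>
     (\<forall>c f. \<forall>r\<in>S b. T (\<lambda>x. c * f x) r = c * T f r)"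

definition pos_op :: "nat \<Rightarrow> nat \<Rightarrow> (((nat \<Rightarrow> nat) \<Rightarrow> real) \<Rightarrow> ((nat \<Rightarrow> nat) \<Rightarrow> real)) \<Rightarrow> bool" where
  "pos_op a b T \<longleftrightarrow> (\<forall>f. (\<forall>r\<in>S a. 0 \<le> f r) \<longrightarrow> (\<forall>r\<in>S b. 0 \<le> T f r))"

definition eigen_op :: "nat \<Rightarrow> (((nat \<Rightarrow> nat) \<Rightarrow> real) \<Rightarrow> ((nat \<Rightarrow> nat) \<Rightarrow> real)) \<Rightarrow> (nat \<Rightarrow> real) \<Rightarrow> bool" where
  "eigen_op N T \<rho> \<longleftrightarrow> (\<forall>n\<le>N. \<forall>P\<in>orth_polys d \<alpha> N n. \<forall>r\<in>S N. T P r = \<rho> n * P r)"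

lemma lin_op_cong: "lin_op a b T \<Longrightarrow> \<forall>r\<in>S a. f r = g r \<Longrightarrow> r \<in> S b \<Longrightarrow> T f r = T g r"
  unfolding lin_op_def by blast

lemma lin_op_add: "lin_op a b T \<Longrightarrow> r \<in> S b \<Longrightarrow> T (\<lambda>x. f x + g x) r = T f r + T g r"
  unfolding lin_op_def by blast

lemma lin_op_scale: "lin_op a b T \<Longrightarrow> r \<in> S b \<Longrightarrow> T (\<lambda>x. c * f x) r = c * T f r"
  unfolding lin_op_def by blast

lemma lin_op_lin:
  assumes T: "lin_op a b T" and r: "r \<in> S b"
  shows "T (\<lambda>x. p * f x + q * g x) r = p * T f r + q * T g r"
  using lin_op_add[OF T r, of "\<lambda>x. p * f x" "\<lambda>x. q * g x"] lin_op_scale[OF T r] by simp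

lemma lin_op_sum:
  assumes T: "lin_op a b T" and X: "finite X" and r: "r \<in> S b"
  shows "T (\<lambda>x. \<Sum>y\<in>X. c y * g y x) r = (\<Sum>y\<in>X. c y * T (g y) r)"
  using X
proof (induction X rule: finite_induct)
  case empty
  then show ?case using lin_op_scale[OF T r, of 0 "\<lambda>x. 0"] by simp
next
  case (insert y F)
  then show ?case
    using lin_op_add[OF T r, of "\<lambda>x. c y * g y x" "\<lambda>x. \<Sum>y\<in>F. c y * g y x"] lin_op_scale[OF T r]
    by simp
qed

lemma lin_op_id: "lin_op a a (\<lambda>f. f)"
  unfolding lin_op_def by simp

lemma pos_op_id: "pos_op a a (\<lambda>f. f)"
  unfolding pos_op_def by simp

lemma lin_op_comp:
  assumes T1: "lin_op a b T1" and T2: "lin_op b c T2"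
  shows "lin_op a c (\<lambda>f. T2 (T1 f))"
  unfolding lin_op_def
proof (intro conjI allI impI ballI)
  fix f g :: "(nat \<Rightarrow> nat) \<Rightarrow> real" and r
  assume "\<forall>r\<in>S a. f r = g r" "r \<in> S c"
  then show "T2 (T1 f) r = T2 (T1 g) r" using lin_op_cong[OF T1] lin_op_cong[OF T2] by blast
next
  fix f g r assume r: "r \<in> S c"
  have "T2 (T1 (\<lambda>x. f x + g x)) r = T2 (\<lambda>x. T1 f x + T1 g x) r"
    using lin_op_add[OF T1] by (intro lin_op_cong[OF T2 _ r]) blast
  then show "T2 (T1 (\<lambda>x. f x + g x)) r = T2 (T1 f) r + T2 (T1 g) r"
    using lin_op_add[OF T2 r] by simp
next
  fix k f r assume r: "r \<in> S c"
  have "T2 (T1 (\<lambda>x. k * f x)) r = T2 (\<lambda>x. k * T1 f x) r"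
    using lin_op_scale[OF T1] by (intro lin_op_cong[OF T2 _ r]) blast
  then show "T2 (T1 (\<lambda>x. k * f x)) r = k * T2 (T1 f) r"
    using lin_op_scale[OF T2 r] by simp
qed

lemma pos_op_comp: "pos_op a b T1 \<Longrightarrow> pos_op b c T2 \<Longrightarrow> pos_op a c (\<lambda>f. T2 (T1 f))"
  unfolding pos_op_def by blast

lemma eigen_op_comp:
  assumes E1: "eigen_op N T1 \<rho>1" and E2: "eigen_op N T2 \<rho>2" and T2: "lin_op N N T2"
  shows "eigen_op N (\<lambda>f. T2 (T1 f)) (\<lambda>n. \<rho>1 n * \<rho>2 n)"
  unfolding eigen_op_def
proof (intro allI impI ballI)
  fix n P r assume n: "n \<le> N" and P: "P \<in> orth_polys d \<alpha> N n" and r: "r \<in> S N"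
  have "T2 (T1 P) r = T2 (\<lambda>x. \<rho>1 n * P x) r"
    using E1 n P unfolding eigen_op_def by (intro lin_op_cong[OF T2 _ r]) blast
  also have "\<dots> = \<rho>1 n * (\<rho>2 n * P r)"
    using lin_op_scale[OF T2 r] E2 n P r unfolding eigen_op_def by simp
  finally show "T2 (T1 P) r = \<rho>1 n * \<rho>2 n * P r" by simp
qed

lemma point_mass_expansion:
  assumes s: "s \<in> S N"
  shows "\<forall>t\<in>S N. (if t = s then 1 / DM d \<alpha> N s else 0)
                  = (\<Sum>x\<in>onb_idx N (Suc N). onb_vec N x s * onb_vec N x t)"
proof -
  define \<delta> where "\<delta> = (\<lambda>t. if t = s then 1 / DM d \<alpha> N s else 0)"
  have "ip d \<alpha> N \<delta> g = g s" for g
  proof -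
    have "ip d \<alpha> N \<delta> g = (\<Sum>t\<in>S N. if t = s then g s else 0)"
      unfolding ip_def \<delta>_def using DM_pos[OF s] by (intro sum.cong) auto
    also have "\<dots> = g s" using s finite_simplex by simp
    finally show ?thesis .
  qed
  then show ?thesis
    using polys_expansion[OF all_functions_polys, of N \<delta>] unfolding \<delta>_def by simp
qed

text \<open>The key criterion: a positive operator on functions on S N acting on the degree-n
  orthogonal polynomials as multiplication by rho n yields an alpha-HPDS, because applying
  it to a point mass at s and evaluating at r gives sum_n rho_n H_n(r, s) / DM(s).\<close>

lemma hpds_criterion:
  assumes T: "lin_op N N T" and pos: "pos_op N N T" and eig: "eigen_op N T \<rho>"
    and \<rho>0: "\<rho> 0 = 1"
  shows "HPDS d \<alpha> N \<rho>"
  unfolding HPDS_def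
proof (intro conjI \<rho>0 ballI)
  fix r s assume r: "r \<in> S N" and s: "s \<in> S N"
  define \<delta> where "\<delta> = (\<lambda>t. if t = s then 1 / DM d \<alpha> N s else 0)"
  have "T \<delta> r = T (\<lambda>t. \<Sum>x\<in>onb_idx N (Suc N). onb_vec N x s * onb_vec N x t) r"
    using point_mass_expansion[OF s] unfolding \<delta>_def by (intro lin_op_cong[OF T _ r]) blast
  also have "\<dots> = (\<Sum>x\<in>onb_idx N (Suc N). onb_vec N x s * T (onb_vec N x) r)"
    by (rule lin_op_sum[OF T finite_onb_idx r])
  also have "\<dots> = (\<Sum>x\<in>onb_idx N (Suc N). onb_vec N x s * (\<rho> (fst x) * onb_vec N x r))"
    using eig r onb_vec_orth_polys unfolding eigen_op_def
    by (intro sum.cong) (auto simp: onb_idx_iff)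
  also have "\<dots> = (\<Sum>n<Suc N. \<Sum>k<length (onb N n). onb_vec N (n, k) s * (\<rho> n * onb_vec N (n, k) r))"
    unfolding onb_idx_def by (subst sum.Sigma) (auto intro!: sum.cong)
  also have "\<dots> = (\<Sum>n\<le>N. \<rho> n * hahn_kernel d \<alpha> N n r s)"
    unfolding hahn_kernel_onb onb_vec_def lessThan_Suc_atMost
    by (simp add: sum_distrib_left ac_simps)
  finally have "T \<delta> r = (\<Sum>n\<le>N. \<rho> n * hahn_kernel d \<alpha> N n r s)" .
  moreover have "0 \<le> T \<delta> r"
    using pos r DM_pos[OF s] unfolding pos_op_def \<delta>_def by simp
  ultimately show "0 \<le> (\<Sum>n\<le>N. \<rho> n * hahn_kernel d \<alpha> N n r s)" by simp
qed

section \<open>Triangular operators\<close>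

definition triangular :: "nat \<Rightarrow> nat \<Rightarrow> (((nat \<Rightarrow> nat) \<Rightarrow> real) \<Rightarrow> ((nat \<Rightarrow> nat) \<Rightarrow> real)) \<Rightarrow> (nat \<Rightarrow> real) \<Rightarrow> bool" where
  "triangular a b T \<mu> \<longleftrightarrow> (\<forall>c. (\<forall>i\<ge>d. c i = 0) \<longrightarrow>
     (\<exists>h\<in>span_on b fmon (exps_lt (deg c)). \<forall>r\<in>S b. T (fmon c) r = \<mu> (deg c) * fmon c r + h r))"

lemma triangularD:
  assumes "triangular a b T \<mu>" "\<forall>i\<ge>d. c i = 0"
  obtains h where "h \<in> span_on b fmon (exps_lt (deg c))"
    "\<forall>r\<in>S b. T (fmon c) r = \<mu> (deg c) * fmon c r + h r"
  using assms unfolding triangular_def by blast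

lemma triangular_cong: "triangular a b T \<mu> \<Longrightarrow> (\<And>n. \<mu> n = \<mu>' n) \<Longrightarrow> triangular a b T \<mu>'"
  unfolding triangular_def by simp

lemma triangular_id: "triangular a a (\<lambda>f. f) (\<lambda>n. 1)"
  unfolding triangular_def by (auto intro!: bexI[of _ "\<lambda>r. 0"] span_on_zero)

lemma triangular_lower:
  assumes T: "lin_op a b T" and tri: "triangular a b T \<mu>"
    and f: "f \<in> span_on a fmon (exps_lt n)"
  shows "T f \<in> span_on b fmon (exps_lt n)"
proof -
  from f obtain e where e: "\<forall>r\<in>S a. f r = (\<Sum>c\<in>exps_lt n. e c * fmon c r)"
    unfolding span_on_def by auto
  have "T (fmon c) \<in> span_on b fmon (exps_lt n)" if c: "c \<in> exps_lt n" for c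
  proof -
    have cs: "\<forall>i\<ge>d. c i = 0" and cn: "deg c < n" using c unfolding exps_lt_def by auto
    obtain h where h: "h \<in> span_on b fmon (exps_lt (deg c))"
      and hT: "\<forall>r\<in>S b. T (fmon c) r = \<mu> (deg c) * fmon c r + h r"
      using triangularD[OF tri cs] by auto
    have "fmon c \<in> span_on b fmon (exps_lt n)" using c by (simp add: span_on_mem finite_exps_lt)
    moreover have "h \<in> span_on b fmon (exps_lt n)"
      using span_on_mono[OF exps_lt_mono finite_exps_lt h] cn by simp
    ultimately have "(\<lambda>r. \<mu> (deg c) * fmon c r + 1 * h r) \<in> span_on b fmon (exps_lt n)"
      by (rule span_on_lin)
    then show ?thesis by (rule span_on_cong) (use hT in simp)
  qed
  then have "(\<lambda>r. \<Sum>c\<in>exps_lt n. e c * T (fmon c) r) \<in> span_on b fmon (exps_lt n)"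
    by (intro span_on_sum finite_exps_lt) auto
  moreover have "\<forall>r\<in>S b. T f r = (\<Sum>c\<in>exps_lt n. e c * T (fmon c) r)"
    using lin_op_cong[OF T e] lin_op_sum[OF T finite_exps_lt] by simp
  ultimately show ?thesis by (rule span_on_cong)
qed

lemma triangular_comp:
  assumes tri1: "triangular a b T1 \<mu>1" and tri2: "triangular b c T2 \<mu>2" and T2: "lin_op b c T2"
  shows "triangular a c (\<lambda>f. T2 (T1 f)) (\<lambda>n. \<mu>1 n * \<mu>2 n)"
  unfolding triangular_def
proof (intro allI impI)
  fix e :: "nat \<Rightarrow> nat" assume es: "\<forall>i\<ge>d. e i = 0"
  obtain h1 where h1: "h1 \<in> span_on b fmon (exps_lt (deg e))"
    and h1T: "\<forall>r\<in>S b. T1 (fmon e) r = \<mu>1 (deg e) * fmon e r + h1 r"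
    using triangularD[OF tri1 es] by auto
  obtain h2 where h2: "h2 \<in> span_on c fmon (exps_lt (deg e))"
    and h2T: "\<forall>r\<in>S c. T2 (fmon e) r = \<mu>2 (deg e) * fmon e r + h2 r"
    using triangularD[OF tri2 es] by auto
  define h where "h = (\<lambda>r. \<mu>1 (deg e) * h2 r + 1 * T2 h1 r)"
  have "h \<in> span_on c fmon (exps_lt (deg e))"
    unfolding h_def by (rule span_on_lin[OF h2 triangular_lower[OF T2 tri2 h1]])
  moreover have "\<forall>r\<in>S c. T2 (T1 (fmon e)) r = \<mu>1 (deg e) * \<mu>2 (deg e) * fmon e r + h r"
  proof
    fix r assume r: "r \<in> S c"
    have "T2 (T1 (fmon e)) r = T2 (\<lambda>x. \<mu>1 (deg e) * fmon e x + 1 * h1 x) r"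
      by (rule lin_op_cong[OF T2 _ r]) (use h1T in simp)
    also have "\<dots> = \<mu>1 (deg e) * T2 (fmon e) r + 1 * T2 h1 r" by (rule lin_op_lin[OF T2 r])
    finally show "T2 (T1 (fmon e)) r = \<mu>1 (deg e) * \<mu>2 (deg e) * fmon e r + h r"
      using h2T r unfolding h_def by (simp add: algebra_simps)
  qed
  ultimately show "\<exists>h\<in>span_on c fmon (exps_lt (deg e)).
      \<forall>r\<in>S c. T2 (T1 (fmon e)) r = \<mu>1 (deg e) * \<mu>2 (deg e) * fmon e r + h r" by blast
qed

lemma triangular_residual:
  assumes T: "lin_op N N T" and tri: "triangular N N T \<mu>" and P: "P \<in> polys d N n"
  shows "(\<lambda>r. T P r - \<mu> n * P r) \<in> span_on N fmon (exps_lt n)"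
proof -
  obtain e where e: "\<forall>r\<in>S N. P r = (\<Sum>c\<in>mons d n. e c * fmon c r)"
    using P unfolding polys_fmon span_on_def by auto
  have residual_term: "(\<lambda>r. T (fmon c) r - \<mu> n * fmon c r) \<in> span_on N fmon (exps_lt n)"
    if c: "c \<in> mons d n" for c
  proof -
    have cs: "\<forall>i\<ge>d. c i = 0" and cn: "deg c \<le> n" using c unfolding mons_def deg_def by auto
    obtain h where h: "h \<in> span_on N fmon (exps_lt (deg c))"
      and hT: "\<forall>r\<in>S N. T (fmon c) r = \<mu> (deg c) * fmon c r + h r"
      using triangularD[OF tri cs] by auto
    have h': "h \<in> span_on N fmon (exps_lt n)"
      using span_on_mono[OF exps_lt_mono finite_exps_lt h] cn by simp
    show ?thesis
    proof (cases "deg c = n")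
      case True
      then show ?thesis using hT by (intro span_on_cong[OF h']) simp
    next
      case False
      then have "fmon c \<in> span_on N fmon (exps_lt n)"
        using cs cn by (intro span_on_mem finite_exps_lt exps_lt_member) auto
      then have "(\<lambda>r. (\<mu> (deg c) - \<mu> n) * fmon c r + 1 * h r) \<in> span_on N fmon (exps_lt n)"
        using h' by (rule span_on_lin)
      then show ?thesis by (rule span_on_cong) (use hT in \<open>simp add: algebra_simps\<close>)
    qed
  qed
  have "(\<lambda>r. \<Sum>c\<in>mons d n. e c * (T (fmon c) r - \<mu> n * fmon c r)) \<in> span_on N fmon (exps_lt n)"
    using residual_term by (intro span_on_sum finite_mons) auto
  moreover have "\<forall>r\<in>S N. T P r - \<mu> n * P r = (\<Sum>c\<in>mons d n. e c * (T (fmon c) r - \<mu> n * fmon c r))"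
    using lin_op_cong[OF T e] lin_op_sum[OF T finite_mons] e
    by (simp add: algebra_simps sum_subtractf sum_distrib_left)
  ultimately show ?thesis by (rule span_on_cong)
qed

text \<open>A self-adjoint triangular operator acts on the degree-n orthogonal polynomials as
  multiplication by mu(n): the residual T P - mu(n) P has degree < n, and so does its
  image under T, hence it is orthogonal to itself.\<close>

lemma triangular_eigen:
  assumes T: "lin_op N N T" and tri: "triangular N N T \<mu>"
    and self_adj: "\<And>f g. ip d \<alpha> N (T f) g = ip d \<alpha> N f (T g)"
  shows "eigen_op N T \<mu>"
  unfolding eigen_op_def
proof (intro allI impI ballI)
  fix n P r assume P: "P \<in> orth_polys d \<alpha> N n" and r: "r \<in> S N"
  define h where "h = (\<lambda>r. T P r - \<mu> n * P r)"
  have h: "h \<in> span_on N fmon (exps_lt n)"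
    unfolding h_def using P orth_polys_polys by (intro triangular_residual[OF T tri])
  have "\<forall>r\<in>S N. h r = 0"
  proof (cases n)
    case 0
    then show ?thesis using h span_on_empty exps_lt_0 by simp
  next
    case (Suc n')
    have "h \<in> polys d N n'" and "T h \<in> polys d N n'"
      using h triangular_lower[OF T tri h] Suc polys_exps_lt by simp_all
    then have "ip d \<alpha> N P h = 0" "ip d \<alpha> N P (T h) = 0"
      using P Suc unfolding orth_polys_def by auto
    moreover have h_lin: "h = (\<lambda>r. 1 * T P r + (- \<mu> n) * P r)" unfolding h_def by simp
    have "ip d \<alpha> N h h = 1 * ip d \<alpha> N (T P) h + (- \<mu> n) * ip d \<alpha> N P h"
      by (subst (1) h_lin) (rule ip_lin)
    ultimately have "ip d \<alpha> N h h = 0" using self_adj by simp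
    then show ?thesis by (rule ip_self_eq_0)
  qed
  then show "T P r = \<mu> n * P r" using r unfolding h_def by simp
qed

section \<open>The Polya urn transitions\<close>

text \<open>The two Polya urn transitions.  add_ball k maps functions on S (k+1) to functions on
  S k by averaging over the colour of an added ball (colour j with probability
  (alpha_j + l_j)/(|alpha| + k)); drop_ball k maps functions on S k to functions on S (k+1)
  by averaging over a uniformly removed ball.\<close>

definition add_ball :: "nat \<Rightarrow> ((nat \<Rightarrow> nat) \<Rightarrow> real) \<Rightarrow> (nat \<Rightarrow> nat) \<Rightarrow> real" where
  "add_ball k f = (\<lambda>l. \<Sum>j<d. (\<alpha> j + real (l j)) / (A + real k) * f (l(j := Suc (l j))))"

definition drop_ball :: "nat \<Rightarrow> ((nat \<Rightarrow> nat) \<Rightarrow> real) \<Rightarrow> (nat \<Rightarrow> nat) \<Rightarrow> real" where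
  "drop_ball k g = (\<lambda>r. \<Sum>i<d. real (r i) / real (Suc k) * g (r(i := r i - 1)))"

lemma raise_simplex: assumes "l \<in> S k" "j < d" shows "l(j := Suc (l j)) \<in> S (Suc k)"
  using assms deg_raise[of j l] unfolding simplex_def deg_def by auto

lemma lower_simplex: assumes "r \<in> S (Suc k)" "i < d" "0 < r i" shows "r(i := r i - 1) \<in> S k"
  using assms deg_lower[of i r] unfolding simplex_def deg_def by auto

lemma sum_real_simplex: "r \<in> S k \<Longrightarrow> (\<Sum>i<d. real (r i)) = real k"
  unfolding simplex_def by (simp flip: of_nat_sum)

lemma lin_op_add_ball: "lin_op (Suc k) k (add_ball k)"
  unfolding lin_op_def add_ball_def using raise_simplex
  by (auto simp: sum.distrib sum_distrib_left algebra_simps intro!: sum.cong)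

lemma lin_op_drop_ball: "lin_op k (Suc k) (drop_ball k)"
  unfolding lin_op_def drop_ball_def
proof (intro conjI allI impI ballI)
  fix f g :: "(nat \<Rightarrow> nat) \<Rightarrow> real" and r assume fg: "\<forall>r\<in>S k. f r = g r" and r: "r \<in> S (Suc k)"
  show "(\<Sum>i<d. real (r i) / real (Suc k) * f (r(i := r i - 1)))
      = (\<Sum>i<d. real (r i) / real (Suc k) * g (r(i := r i - 1)))"
    using fg lower_simplex[OF r] by (intro sum.cong) auto
qed (simp_all add: sum.distrib sum_distrib_left algebra_simps)

lemma pos_op_add_ball: "pos_op (Suc k) k (add_ball k)"
  unfolding pos_op_def add_ball_def
proof (intro allI impI ballI sum_nonneg mult_nonneg_nonneg divide_nonneg_pos)
  fix f :: "(nat \<Rightarrow> nat) \<Rightarrow> real" and l j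
  assume f: "\<forall>r\<in>S (Suc k). 0 \<le> f r" and l: "l \<in> S k" and j: "j \<in> {..<d}"
  show "0 \<le> \<alpha> j + real (l j)" using alpha_pos[of j] j by simp
  show "0 < A + real k" using A_pos by simp
  show "0 \<le> f (l(j := Suc (l j)))" using f raise_simplex[OF l] j by simp
qed

lemma pos_op_drop_ball: "pos_op k (Suc k) (drop_ball k)"
  unfolding pos_op_def drop_ball_def
proof (intro allI impI ballI sum_nonneg)
  fix f :: "(nat \<Rightarrow> nat) \<Rightarrow> real" and r i
  assume f: "\<forall>r\<in>S k. 0 \<le> f r" and r: "r \<in> S (Suc k)" and i: "i \<in> {..<d}"
  show "0 \<le> real (r i) / real (Suc k) * f (r(i := r i - 1))"
    using f lower_simplex[OF r] i by (cases "r i = 0") auto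
qed

lemma fmon_raise_point:
  assumes j: "j < d"
  shows "fmon c (l(j := Suc (l j))) = fmon c l + real (c j) * fmon (c(j := c j - 1)) l"
proof -
  define R where "R = (\<Prod>i\<in>{..<d} - {j}. falling (real (l i)) (c i))"
  have 1: "fmon c (l(j := Suc (l j))) = falling (real (Suc (l j))) (c j) * R"
    unfolding fmon_def R_def using prod_upd[OF j, of "\<lambda>i y. falling (real y) (c i)" l] by simp
  have 2: "fmon c l = falling (real (l j)) (c j) * R"
    unfolding fmon_def R_def using prod_split[OF j, of "\<lambda>i y. falling (real y) (c i)" l] by simp
  have 3: "fmon (c(j := c j - 1)) l = falling (real (l j)) (c j - 1) * R"
    unfolding fmon_def R_def using prod_upd[OF j, of "\<lambda>i e. falling (real (l i)) e" c] by simp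
  show ?thesis unfolding 1 2 3 using falling_shift[of "real (l j)" "c j"] by (simp add: algebra_simps)
qed

lemma fmon_lower_point:
  assumes i: "i < d"
  shows "real (r i) * fmon c (r(i := r i - 1)) = fmon c r * (real (r i) - real (c i))"
proof -
  define R where "R = (\<Prod>j\<in>{..<d} - {i}. falling (real (r j)) (c j))"
  have 1: "fmon c (r(i := r i - 1)) = falling (real (r i - 1)) (c i) * R"
    unfolding fmon_def R_def using prod_upd[OF i, of "\<lambda>j y. falling (real y) (c j)" r] by simp
  have 2: "fmon c r = falling (real (r i)) (c i) * R"
    unfolding fmon_def R_def using prod_split[OF i, of "\<lambda>j y. falling (real y) (c j)" r] by simp
  show ?thesis
  proof (cases "r i = 0")
    case True
    then show ?thesis unfolding 2 using falling_of_nat_eq_0[of 0 "c i"] by (cases "c i = 0") auto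
  next
    case False
    then have "real (r i) * falling (real (r i - 1)) (c i) = falling (real (r i)) (c i) * (real (r i) - real (c i))"
      using falling_Suc_left[of "real (r i)" "c i"] falling_Suc[of "real (r i)" "c i"] by (simp add: of_nat_diff)
    then show ?thesis unfolding 1 2 by (simp add: ac_simps)
  qed
qed

lemma fmon_lower_exponent:
  assumes j: "j < d"
  shows "real (c j) * (real (l j) * fmon (c(j := c j - 1)) l)
       = real (c j) * (fmon c l + (real (c j) - 1) * fmon (c(j := c j - 1)) l)"
proof (cases "c j = 0")
  case False
  define b where "b = c(j := c j - 1)"
  have "c = b(j := Suc (b j))" unfolding b_def using False by auto
  then have "fmon c l = (real (l j) - real (b j)) * fmon b l" using fmon_raise[OF j, of b l] by simp
  moreover have "real (b j) = real (c j) - 1" unfolding b_def using False by simp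
  ultimately show ?thesis unfolding b_def[symmetric] by (simp add: algebra_simps)
qed simp

lemma add_ball_fmon_term:
  assumes j: "j < d"
  shows "(\<alpha> j + real (l j)) * fmon c (l(j := Suc (l j)))
       = (\<alpha> j + real (l j) + real (c j)) * fmon c l
         + (\<alpha> j + real (c j) - 1) * (real (c j) * fmon (c(j := c j - 1)) l)"
  using fmon_raise_point[OF j, of c l] fmon_lower_exponent[OF j, of c l] by (simp add: algebra_simps)

lemma fmon_lower_exponent_span:
  assumes j: "j < d" and c: "\<forall>i\<ge>d. c i = 0"
  shows "(\<lambda>l. real (c j) * fmon (c(j := c j - 1)) l) \<in> span_on k fmon (exps_lt (deg c))"
proof (cases "c j = 0")
  case True
  then show ?thesis using span_on_zero by simp
next
  case False
  then have "c(j := c j - 1) \<in> exps_lt (deg c)"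
    using j c deg_lower[of j c] by (intro exps_lt_member) auto
  then have "fmon (c(j := c j - 1)) \<in> span_on k fmon (exps_lt (deg c))"
    by (simp add: span_on_mem finite_exps_lt)
  then show ?thesis using lin_closed_scale[OF lin_closed_span_on] by blast
qed

lemma triangular_add_ball: "triangular (Suc k) k (add_ball k) (\<lambda>n. (A + real k + real n) / (A + real k))"
  unfolding triangular_def
proof (intro allI impI)
  fix c :: "nat \<Rightarrow> nat" assume c: "\<forall>i\<ge>d. c i = 0"
  define h where "h = (\<lambda>l. \<Sum>j<d. ((\<alpha> j + real (c j) - 1) / (A + real k))
                                  * (real (c j) * fmon (c(j := c j - 1)) l))"
  have "h \<in> span_on k fmon (exps_lt (deg c))"
    unfolding h_def using fmon_lower_exponent_span[OF _ c] by (intro span_on_sum) auto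
  moreover have "add_ball k (fmon c) l = (A + real k + real (deg c)) / (A + real k) * fmon c l + h l"
    if l: "l \<in> S k" for l
  proof -
    have "add_ball k (fmon c) l
        = (\<Sum>j<d. (\<alpha> j + real (l j) + real (c j)) / (A + real k) * fmon c l
            + ((\<alpha> j + real (c j) - 1) / (A + real k)) * (real (c j) * fmon (c(j := c j - 1)) l))"
      unfolding add_ball_def
    proof (intro sum.cong refl)
      fix j assume "j \<in> {..<d}"
      then show "(\<alpha> j + real (l j)) / (A + real k) * fmon c (l(j := Suc (l j)))
          = (\<alpha> j + real (l j) + real (c j)) / (A + real k) * fmon c l
            + ((\<alpha> j + real (c j) - 1) / (A + real k)) * (real (c j) * fmon (c(j := c j - 1)) l)"
        using add_ball_fmon_term[of j l c] by (simp add: add_divide_distrib[symmetric])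
    qed
    also have "\<dots> = (A + real k + real (deg c)) / (A + real k) * fmon c l + h l"
    proof -
      have "(\<Sum>j<d. \<alpha> j + real (l j) + real (c j)) = A + real k + real (deg c)"
        using sum_real_simplex[OF l] by (simp add: sum.distrib abs_alpha_def deg_def)
      then have "(\<Sum>j<d. (\<alpha> j + real (l j) + real (c j)) / (A + real k) * fmon c l)
          = (A + real k + real (deg c)) / (A + real k) * fmon c l"
        by (simp add: sum_distrib_right[symmetric] sum_divide_distrib[symmetric])
      then show ?thesis unfolding h_def sum.distrib by simp
    qed
    finally show ?thesis .
  qed
  ultimately show "\<exists>h\<in>span_on k fmon (exps_lt (deg c)). \<forall>l\<in>S k.
      add_ball k (fmon c) l = (A + real k + real (deg c)) / (A + real k) * fmon c l + h l" by blast
qed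

lemma triangular_drop_ball: "triangular k (Suc k) (drop_ball k) (\<lambda>n. (real (Suc k) - real n) / real (Suc k))"
  unfolding triangular_def
proof (intro allI impI bexI[of _ "\<lambda>r. 0"] ballI span_on_zero)
  fix c :: "nat \<Rightarrow> nat" and r assume r: "r \<in> S (Suc k)"
  have "drop_ball k (fmon c) r = (\<Sum>i<d. fmon c r * (real (r i) - real (c i)) / real (Suc k))"
    unfolding drop_ball_def using fmon_lower_point by (intro sum.cong) (auto simp: field_simps)
  also have "\<dots> = fmon c r * ((\<Sum>i<d. real (r i)) - (\<Sum>i<d. real (c i))) / real (Suc k)"
    by (simp add: sum_divide_distrib[symmetric] sum_distrib_left[symmetric] sum_subtractf)
  also have "\<dots> = fmon c r * (real (Suc k) - real (deg c)) / real (Suc k)"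
    using sum_real_simplex[OF r] by (simp add: deg_def)
  finally show "drop_ball k (fmon c) r = (real (Suc k) - real (deg c)) / real (Suc k) * fmon c r + 0"
    by simp
qed

text \<open>Adjointness: summing over (point with k+1 balls, removed ball) is the same as summing
  over (point with k balls, added ball).\<close>

lemma sum_simplex_shift:
  "(\<Sum>r\<in>S (Suc k). \<Sum>i<d. real (r i) * F (r(i := r i - 1)) i r)
   = (\<Sum>l\<in>S k. \<Sum>j<d. real (Suc (l j)) * F l j (l(j := Suc (l j))))"
proof -
  define G where "G = (\<lambda>(r, i). real (r i) * F (r(i := r i - 1)) i r)"
  define raise where "raise = (\<lambda>(l :: nat \<Rightarrow> nat, j :: nat). (l(j := Suc (l j)), j))"
  define P where "P = {x \<in> S (Suc k) \<times> {..<d}. 0 < fst x (snd x)}"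
  have "(\<Sum>r\<in>S (Suc k). \<Sum>i<d. real (r i) * F (r(i := r i - 1)) i r) = (\<Sum>x\<in>S (Suc k) \<times> {..<d}. G x)"
    unfolding G_def by (subst sum.Sigma) (auto simp: finite_simplex)
  also have "\<dots> = (\<Sum>x\<in>P. G x)"
    by (rule sum.mono_neutral_right) (auto simp: P_def G_def finite_simplex)
  also have "P = raise ` (S k \<times> {..<d})"
  proof
    show "raise ` (S k \<times> {..<d}) \<subseteq> P" unfolding P_def raise_def using raise_simplex by auto
    show "P \<subseteq> raise ` (S k \<times> {..<d})"
    proof
      fix x assume x: "x \<in> P"
      obtain r i where xr: "x = (r, i)" by (cases x)
      have r: "r \<in> S (Suc k)" and i: "i < d" and ri: "0 < r i" using x xr unfolding P_def by auto
      have "raise (r(i := r i - 1), i) = x" unfolding raise_def xr using ri by auto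
      then show "x \<in> raise ` (S k \<times> {..<d})" using lower_simplex[OF r i ri] i by force
    qed
  qed
  also have "(\<Sum>x\<in>raise ` (S k \<times> {..<d}). G x) = (\<Sum>x\<in>S k \<times> {..<d}. G (raise x))"
  proof (rule sum.reindex[unfolded comp_def], rule inj_onI)
    fix x y assume "raise x = raise y"
    then show "x = y" unfolding raise_def
      by (cases x, cases y) (auto simp: fun_eq_iff split: if_splits)
  qed
  also have "\<dots> = (\<Sum>(l, j)\<in>S k \<times> {..<d}. real (Suc (l j)) * F l j (l(j := Suc (l j))))"
    unfolding G_def raise_def by (intro sum.cong) auto
  also have "\<dots> = (\<Sum>l\<in>S k. \<Sum>j<d. real (Suc (l j)) * F l j (l(j := Suc (l j))))"
    by (rule sum.cartesian_product[symmetric])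
  finally show ?thesis .
qed

lemma DM_raise:
  assumes j: "j < d"
  shows "DM d \<alpha> (Suc k) (l(j := Suc (l j))) * real (Suc (l j)) / real (Suc k)
       = DM d \<alpha> k l * (\<alpha> j + real (l j)) / (A + real k)"
proof -
  define Rf where "Rf = (\<Prod>i\<in>{..<d} - {j}. fact (l i) :: real)"
  define Rp where "Rp = (\<Prod>i\<in>{..<d} - {j}. pochhammer (\<alpha> i) (l i))"
  have f1: "(\<Prod>i<d. fact ((l(j := Suc (l j))) i) :: real) = fact (Suc (l j)) * Rf"
    unfolding Rf_def using prod_upd[OF j, of "\<lambda>i y. fact y :: real" l] by simp
  have f2: "(\<Prod>i<d. fact (l i) :: real) = fact (l j) * Rf"
    unfolding Rf_def using prod_split[OF j, of "\<lambda>i y. fact y :: real" l] by simp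
  have p1: "(\<Prod>i<d. pochhammer (\<alpha> i) ((l(j := Suc (l j))) i)) = pochhammer (\<alpha> j) (Suc (l j)) * Rp"
    unfolding Rp_def using prod_upd[OF j, of "\<lambda>i y. pochhammer (\<alpha> i) y" l] by simp
  have p2: "(\<Prod>i<d. pochhammer (\<alpha> i) (l i)) = pochhammer (\<alpha> j) (l j) * Rp"
    unfolding Rp_def using prod_split[OF j, of "\<lambda>i y. pochhammer (\<alpha> i) y" l] by simp
  define K where "K = real (Suc k)"
  define L where "L = real (Suc (l j))"
  define fl where "fl = (fact (l j) :: real)"
  define fk where "fk = (fact k :: real)"
  define pj where "pj = pochhammer (\<alpha> j) (l j)"
  define pA where "pA = pochhammer A k"
  define Ak where "Ak = A + real k"
  have e1: "(fact (Suc k) :: real) = K * fk" unfolding K_def fk_def by (simp only: fact_Suc)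
  have e2: "(fact (Suc (l j)) :: real) = L * fl" unfolding L_def fl_def by (simp only: fact_Suc)
  have e3: "pochhammer (\<alpha> j) (Suc (l j)) = pj * (\<alpha> j + real (l j))"
    unfolding pj_def by (simp add: pochhammer_Suc)
  have e4: "pochhammer A (Suc k) = pA * Ak" unfolding pA_def Ak_def by (simp add: pochhammer_Suc)
  have pos: "0 < Rf" "0 < K" "0 < L" "0 < fl" "0 < fk" "0 < pA" "0 < Ak"
    unfolding Rf_def K_def L_def fl_def fk_def pA_def Ak_def
    using pochhammer_A_pos[of 0 k] A_pos by (auto intro: prod_pos)
  show ?thesis
    unfolding DM_def f1 f2 p1 p2 e1 e2 e3 e4 fl_def[symmetric] fk_def[symmetric] pj_def[symmetric]
      pA_def[symmetric] Ak_def[symmetric] K_def[symmetric] L_def[symmetric]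
    using pos by (simp add: field_simps)
qed

lemma add_drop_adjoint: "ip d \<alpha> (Suc k) (drop_ball k g) f = ip d \<alpha> k g (add_ball k f)"
proof -
  define F where "F = (\<lambda>l (i::nat) r. DM d \<alpha> (Suc k) r / real (Suc k) * g l * f r)"
  have "ip d \<alpha> (Suc k) (drop_ball k g) f
      = (\<Sum>r\<in>S (Suc k). \<Sum>i<d. real (r i) * F (r(i := r i - 1)) i r)"
    unfolding ip_def drop_ball_def F_def by (simp add: sum_distrib_left sum_distrib_right ac_simps)
  also have "\<dots> = (\<Sum>l\<in>S k. \<Sum>j<d. real (Suc (l j)) * F l j (l(j := Suc (l j))))"
    by (rule sum_simplex_shift)
  also have "\<dots> = (\<Sum>l\<in>S k. \<Sum>j<d. DM d \<alpha> k l * (\<alpha> j + real (l j)) / (A + real k)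
                                      * g l * f (l(j := Suc (l j))))"
  proof (intro sum.cong refl)
    fix l j assume "j \<in> {..<d}"
    then have j: "j < d" by simp
    have "real (Suc (l j)) * F l j (l(j := Suc (l j)))
        = DM d \<alpha> (Suc k) (l(j := Suc (l j))) * real (Suc (l j)) / real (Suc k) * g l * f (l(j := Suc (l j)))"
      unfolding F_def by (simp only: mult_ac times_divide_eq_left times_divide_eq_right)
    also have "\<dots> = DM d \<alpha> k l * (\<alpha> j + real (l j)) / (A + real k) * g l * f (l(j := Suc (l j)))"
      by (simp only: DM_raise[OF j])
    finally show "real (Suc (l j)) * F l j (l(j := Suc (l j)))
        = DM d \<alpha> k l * (\<alpha> j + real (l j)) / (A + real k) * g l * f (l(j := Suc (l j)))" .
  qed
  also have "\<dots> = ip d \<alpha> k g (add_ball k f)"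
    unfolding ip_def add_ball_def by (simp add: sum_distrib_left ac_simps)
  finally show ?thesis .
qed

section \<open>Iterated transitions and the two sequences\<close>

primrec add_balls :: "nat \<Rightarrow> nat \<Rightarrow> ((nat \<Rightarrow> nat) \<Rightarrow> real) \<Rightarrow> (nat \<Rightarrow> nat) \<Rightarrow> real" where
  "add_balls a 0 f = f"
| "add_balls a (Suc t) f = add_ball a (add_balls (Suc a) t f)"

primrec drop_balls :: "nat \<Rightarrow> nat \<Rightarrow> ((nat \<Rightarrow> nat) \<Rightarrow> real) \<Rightarrow> (nat \<Rightarrow> nat) \<Rightarrow> real" where
  "drop_balls a 0 g = g"
| "drop_balls a (Suc t) g = drop_ball (a + t) (drop_balls a t g)"

definition drop_eig :: "nat \<Rightarrow> nat \<Rightarrow> nat \<Rightarrow> real" where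
  "drop_eig a t n = (\<Prod>i<t. (real (Suc (a + i)) - real n) / real (Suc (a + i)))"

lemma pochhammer_shift:
  assumes "0 < x" shows "pochhammer (x + 1) n = pochhammer x n * (x + real n) / x"
proof -
  have "x * pochhammer (x + 1) n = pochhammer x n * (x + real n)"
    using pochhammer_rec[of x n] pochhammer_Suc[of x n] by simp
  then show ?thesis using assms by (simp add: field_simps)
qed

lemma add_balls_props:
  "lin_op (a + t) a (add_balls a t) \<and> pos_op (a + t) a (add_balls a t) \<and>
   triangular (a + t) a (add_balls a t) (\<lambda>n. pochhammer (A + real (a + t)) n / pochhammer (A + real a) n)"
proof (induction t arbitrary: a)
  case 0
  have "add_balls a 0 = (\<lambda>f. f)" by (simp add: fun_eq_iff)
  moreover have "pochhammer (A + real a) n / pochhammer (A + real a) n = 1" for n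
    using pochhammer_A_pos[of a n] by simp
  ultimately show ?case using lin_op_id pos_op_id triangular_id by simp
next
  case (Suc t)
  have e: "add_balls a (Suc t) = (\<lambda>f. add_ball a (add_balls (Suc a) t f))" by (simp add: fun_eq_iff)
  have IH: "lin_op (a + Suc t) (Suc a) (add_balls (Suc a) t)" "pos_op (a + Suc t) (Suc a) (add_balls (Suc a) t)"
    "triangular (a + Suc t) (Suc a) (add_balls (Suc a) t)
       (\<lambda>n. pochhammer (A + real (a + Suc t)) n / pochhammer (A + real (Suc a)) n)"
    using Suc.IH[of "Suc a"] by simp_all
  have eig: "pochhammer (A + real (a + Suc t)) n / pochhammer (A + real (Suc a)) n
      * ((A + real a + real n) / (A + real a))
      = pochhammer (A + real (a + Suc t)) n / pochhammer (A + real a) n" for n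
  proof -
    define x where "x = A + real a"
    have x: "0 < x" "0 < x + real n" "0 < pochhammer x n"
      unfolding x_def using A_pos pochhammer_A_pos[of a n] by auto
    have "pochhammer (A + real (Suc a)) n = pochhammer x n * (x + real n) / x"
      using pochhammer_shift[OF x(1), of n] unfolding x_def by (simp add: ac_simps)
    moreover have "A + real a + real n = x + real n" unfolding x_def ..
    moreover have "Q / (p * y / x) * (y / x) = Q / p" if "0 < p" "0 < y" for Q p y
      using that x(1) by (simp add: field_simps)
    ultimately show ?thesis unfolding x_def[symmetric] using x by simp
  qed
  show ?case unfolding e
    using lin_op_comp[OF IH(1) lin_op_add_ball] pos_op_comp[OF IH(2) pos_op_add_ball]
      triangular_cong[OF triangular_comp[OF IH(3) triangular_add_ball lin_op_add_ball] eig]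
    by simp
qed

lemma drop_balls_props:
  "lin_op a (a + t) (drop_balls a t) \<and> pos_op a (a + t) (drop_balls a t) \<and>
   triangular a (a + t) (drop_balls a t) (drop_eig a t)"
proof (induction t)
  case 0
  have "drop_balls a 0 = (\<lambda>f. f)" "drop_eig a 0 = (\<lambda>n. 1)"
    unfolding drop_eig_def by (simp_all add: fun_eq_iff)
  then show ?case using lin_op_id pos_op_id triangular_id by simp
next
  case (Suc t)
  have e: "drop_balls a (Suc t) = (\<lambda>f. drop_ball (a + t) (drop_balls a t f))" by (simp add: fun_eq_iff)
  have eig: "drop_eig a t n * ((real (Suc (a + t)) - real n) / real (Suc (a + t))) = drop_eig a (Suc t) n" for n
    unfolding drop_eig_def by (simp add: prod.lessThan_Suc)
  show ?case unfolding e
    using Suc.IH lin_op_comp[OF _ lin_op_drop_ball] pos_op_comp[OF _ pos_op_drop_ball]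
      triangular_cong[OF triangular_comp[OF _ triangular_drop_ball lin_op_drop_ball] eig]
    by simp
qed

lemma drop_eig_eq:
  assumes "n \<le> a + t" shows "drop_eig a t n = falling (real a) n / falling (real (a + t)) n"
proof -
  have "drop_eig a t n * falling (real (a + t)) n = falling (real a) n"
  proof (induction t)
    case 0
    then show ?case unfolding drop_eig_def by simp
  next
    case (Suc t)
    define y where "y = real (a + t)"
    have y: "0 < y + 1" unfolding y_def by simp
    have step: "falling (y + 1) n * (y + 1 - real n) = (y + 1) * falling y n"
      using falling_Suc_left[of "y + 1" n] falling_Suc[of "y + 1" n] by simp
    have "drop_eig a (Suc t) n * falling (real (a + Suc t)) n
        = drop_eig a t n * ((y + 1 - real n) / (y + 1)) * falling (y + 1) n"
      unfolding drop_eig_def y_def by (simp add: prod.lessThan_Suc add_ac)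
    also have "\<dots> = drop_eig a t n * ((falling (y + 1) n * (y + 1 - real n)) / (y + 1))"
      by (simp add: field_simps)
    also have "\<dots> = drop_eig a t n * falling y n" unfolding step using y by simp
    finally show ?case using Suc.IH unfolding y_def by simp
  qed
  then show ?thesis using falling_of_nat_pos[OF assms] by (simp add: field_simps)
qed

lemma add_balls_Suc_last: "add_balls a (Suc t) f = add_balls a t (add_ball (a + t) f)"
  by (induction t arbitrary: a) simp_all

lemma balls_adjoint: "ip d \<alpha> (a + t) (drop_balls a t g) f = ip d \<alpha> a g (add_balls a t f)"
proof (induction t arbitrary: f)
  case (Suc t)
  have "ip d \<alpha> (a + Suc t) (drop_balls a (Suc t) g) f
      = ip d \<alpha> (a + t) (drop_balls a t g) (add_ball (a + t) f)"
    using add_drop_adjoint by simp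
  also have "\<dots> = ip d \<alpha> a g (add_balls a (Suc t) f)" by (simp only: Suc.IH add_balls_Suc_last)
  finally show ?case .
qed simp

text \<open>Removing t balls and adding them back by the urn (redraw), and adding s balls and
  removing s balls again (overshoot), are self-adjoint positive operators on functions on
  a simplex; by triangularity they act diagonally on the orthogonal polynomials.\<close>

definition redraw :: "nat \<Rightarrow> nat \<Rightarrow> ((nat \<Rightarrow> nat) \<Rightarrow> real) \<Rightarrow> (nat \<Rightarrow> nat) \<Rightarrow> real" where
  "redraw m t f = drop_balls m t (add_balls m t f)"

definition overshoot :: "nat \<Rightarrow> nat \<Rightarrow> ((nat \<Rightarrow> nat) \<Rightarrow> real) \<Rightarrow> (nat \<Rightarrow> nat) \<Rightarrow> real" where
  "overshoot N s f = add_balls N s (drop_balls N s f)"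

lemma redraw_props:
  "lin_op (m + t) (m + t) (redraw m t) \<and> pos_op (m + t) (m + t) (redraw m t) \<and>
   eigen_op (m + t) (redraw m t)
     (\<lambda>n. pochhammer (A + real (m + t)) n / pochhammer (A + real m) n * drop_eig m t n)"
proof -
  have e: "redraw m t = (\<lambda>f. drop_balls m t (add_balls m t f))" unfolding redraw_def by auto
  note U = add_balls_props[of m t, THEN conjunct1] add_balls_props[of m t, THEN conjunct2, THEN conjunct1]
    add_balls_props[of m t, THEN conjunct2, THEN conjunct2]
  note D = drop_balls_props[of m t, THEN conjunct1] drop_balls_props[of m t, THEN conjunct2, THEN conjunct1]
    drop_balls_props[of m t, THEN conjunct2, THEN conjunct2]
  have lin: "lin_op (m + t) (m + t) (redraw m t)" unfolding e by (rule lin_op_comp[OF U(1) D(1)])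
  have pos: "pos_op (m + t) (m + t) (redraw m t)" unfolding e by (rule pos_op_comp[OF U(2) D(2)])
  have tri: "triangular (m + t) (m + t) (redraw m t)
      (\<lambda>n. pochhammer (A + real (m + t)) n / pochhammer (A + real m) n * drop_eig m t n)"
    unfolding e by (rule triangular_comp[OF U(3) D(3) D(1)])
  have self_adj: "ip d \<alpha> (m + t) (redraw m t f) g = ip d \<alpha> (m + t) f (redraw m t g)" for f g
  proof -
    have "ip d \<alpha> (m + t) (redraw m t f) g = ip d \<alpha> m (add_balls m t f) (add_balls m t g)"
      unfolding redraw_def by (rule balls_adjoint)
    moreover have "ip d \<alpha> (m + t) f (redraw m t g) = ip d \<alpha> m (add_balls m t g) (add_balls m t f)"
      unfolding redraw_def by (subst ip_sym) (rule balls_adjoint)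
    ultimately show ?thesis by (simp only: ip_sym)
  qed
  show ?thesis using lin pos triangular_eigen[OF lin tri self_adj] by blast
qed

lemma overshoot_props:
  "lin_op N N (overshoot N s) \<and> pos_op N N (overshoot N s) \<and>
   eigen_op N (overshoot N s)
     (\<lambda>n. drop_eig N s n * (pochhammer (A + real (N + s)) n / pochhammer (A + real N) n))"
proof -
  have e: "overshoot N s = (\<lambda>f. add_balls N s (drop_balls N s f))" unfolding overshoot_def by auto
  note U = add_balls_props[of N s, THEN conjunct1] add_balls_props[of N s, THEN conjunct2, THEN conjunct1]
    add_balls_props[of N s, THEN conjunct2, THEN conjunct2]
  note D = drop_balls_props[of N s, THEN conjunct1] drop_balls_props[of N s, THEN conjunct2, THEN conjunct1]
    drop_balls_props[of N s, THEN conjunct2, THEN conjunct2]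
  have lin: "lin_op N N (overshoot N s)" unfolding e by (rule lin_op_comp[OF D(1) U(1)])
  have pos: "pos_op N N (overshoot N s)" unfolding e by (rule pos_op_comp[OF D(2) U(2)])
  have tri: "triangular N N (overshoot N s)
      (\<lambda>n. drop_eig N s n * (pochhammer (A + real (N + s)) n / pochhammer (A + real N) n))"
    unfolding e by (rule triangular_comp[OF D(3) U(3) U(1)])
  have self_adj: "ip d \<alpha> N (overshoot N s f) g = ip d \<alpha> N f (overshoot N s g)" for f g
  proof -
    have "ip d \<alpha> N (overshoot N s f) g = ip d \<alpha> (N + s) (drop_balls N s g) (drop_balls N s f)"
      unfolding overshoot_def by (subst ip_sym) (rule balls_adjoint[symmetric])
    moreover have "ip d \<alpha> N f (overshoot N s g) = ip d \<alpha> (N + s) (drop_balls N s f) (drop_balls N s g)"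
      unfolding overshoot_def by (rule balls_adjoint[symmetric])
    ultimately show ?thesis by (simp only: ip_sym)
  qed
  show ?thesis using lin pos triangular_eigen[OF lin tri self_adj] by blast
qed

text \<open>The first sequence: eigenvalues of redraw m (N - m) on functions on S N.\<close>

lemma hpds_redraw:
  assumes "m \<le> N"
  shows "HPDS d \<alpha> N (\<lambda>n. falling (real m) n / pochhammer (A + real m) n
                         * (pochhammer (A + real N) n / falling (real N) n))"
proof -
  obtain t where N: "N = m + t" using assms le_Suc_ex by blast
  define \<rho> where "\<rho> = (\<lambda>n. pochhammer (A + real N) n / pochhammer (A + real m) n * drop_eig m t n)"
  have R: "lin_op N N (redraw m t)" "pos_op N N (redraw m t)" "eigen_op N (redraw m t) \<rho>"
    using redraw_props[of m t] unfolding N[symmetric] \<rho>_def by blast+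
  have "HPDS d \<alpha> N \<rho>" by (rule hpds_criterion[OF R]) (simp add: \<rho>_def drop_eig_def)
  moreover have "\<rho> n = falling (real m) n / pochhammer (A + real m) n
                       * (pochhammer (A + real N) n / falling (real N) n)" if "n \<le> N" for n
  proof -
    have "drop_eig m t n = falling (real m) n / falling (real N) n"
      using drop_eig_eq[of n m t] that N by simp
    then show ?thesis unfolding \<rho>_def by simp
  qed
  ultimately show ?thesis using HPDS_cong[of N \<rho>] by simp
qed

lemma hpds_redraw_overshoot:
  assumes "m \<le> N"
  shows "HPDS d \<alpha> N (\<lambda>n. falling (real m) n / pochhammer (A + real m) n
                         * (pochhammer (A + real (N + s)) n / falling (real (N + s)) n))"
proof -
  obtain t where N: "N = m + t" using assms le_Suc_ex by blast
  define \<rho>1 where "\<rho>1 = (\<lambda>n. drop_eig N s n * (pochhammer (A + real (N + s)) n / pochhammer (A + real N) n))"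
  define \<rho>2 where "\<rho>2 = (\<lambda>n. pochhammer (A + real N) n / pochhammer (A + real m) n * drop_eig m t n)"
  have R: "lin_op N N (redraw m t)" "pos_op N N (redraw m t)" "eigen_op N (redraw m t) \<rho>2"
    using redraw_props[of m t] unfolding N[symmetric] \<rho>2_def by blast+
  have O: "lin_op N N (overshoot N s)" "pos_op N N (overshoot N s)" "eigen_op N (overshoot N s) \<rho>1"
    using overshoot_props[of N s] unfolding \<rho>1_def by blast+
  have \<rho>0: "\<rho>1 0 = 1" "\<rho>2 0 = 1" unfolding \<rho>1_def \<rho>2_def drop_eig_def by simp_all
  have "HPDS d \<alpha> N (\<lambda>n. \<rho>1 n * \<rho>2 n)"
  proof (rule hpds_criterion)
    show "lin_op N N (\<lambda>f. redraw m t (overshoot N s f))" by (rule lin_op_comp[OF O(1) R(1)])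
    show "pos_op N N (\<lambda>f. redraw m t (overshoot N s f))" by (rule pos_op_comp[OF O(2) R(2)])
    show "eigen_op N (\<lambda>f. redraw m t (overshoot N s f)) (\<lambda>n. \<rho>1 n * \<rho>2 n)"
      by (rule eigen_op_comp[OF O(3) R(3) R(1)])
  qed (simp add: \<rho>0)
  moreover have "\<rho>1 n * \<rho>2 n = falling (real m) n / pochhammer (A + real m) n
      * (pochhammer (A + real (N + s)) n / falling (real (N + s)) n)" if n: "n \<le> N" for n
  proof -
    have d1: "drop_eig N s n = falling (real N) n / falling (real (N + s)) n"
      using drop_eig_eq[of n N s] n by simp
    have d2: "drop_eig m t n = falling (real m) n / falling (real N) n"
      using drop_eig_eq[of n m t] n N by simp
    have pos: "falling (real N) n \<noteq> 0" "pochhammer (A + real N) n \<noteq> 0"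
      using falling_of_nat_pos[OF n] pochhammer_A_pos[of N n] by auto
    show ?thesis unfolding \<rho>1_def \<rho>2_def d1 d2 using pos by (simp add: field_simps)
  qed
  ultimately show ?thesis using HPDS_cong[of N "\<lambda>n. \<rho>1 n * \<rho>2 n"] by simp
qed

lemma hpds_limit_sequence:
  assumes "m \<le> N"
  shows "HPDS d \<alpha> N (\<lambda>n. falling (real m) n / pochhammer (A + real m) n)"
proof (rule HPDS_limit[OF hpds_redraw_overshoot[OF assms]])
  fix n assume n: "n \<le> N"
  define c where "c = falling (real m) n / pochhammer (A + real m) n"
  have "(\<lambda>s. c * (pochhammer (A + real (N + s)) n / falling (real (N + s)) n)) \<longlonglongrightarrow> c * 1"
    by (rule tendsto_mult[OF tendsto_const pochhammer_falling_ratio_tendsto[OF n]])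
  then show "(\<lambda>s. falling (real m) n / pochhammer (A + real m) n
               * (pochhammer (A + real (N + s)) n / falling (real (N + s)) n))
             \<longlonglongrightarrow> falling (real m) n / pochhammer (A + real m) n"
    unfolding c_def by (simp only: mult_1_right)
qed simp

end

theorem lemma7p6:
  fixes d N m :: nat and \<alpha> :: "nat \<Rightarrow> real"
  assumes "d \<ge> 2" and "\<forall>i<d. \<alpha> i > 0" and "m \<le> N"
  shows "HPDS d \<alpha> N (\<lambda>n. falling (real m) n / pochhammer (abs_alpha d \<alpha> + real m) n
                         * (pochhammer (abs_alpha d \<alpha> + real N) n / falling (real N) n))
       \<and> HPDS d \<alpha> N (\<lambda>n. falling (real m) n / pochhammer (abs_alpha d \<alpha> + real m) n)"
proof -
  interpret dirichlet_multinomial d \<alpha> using assms(1,2) by unfold_locales auto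
  show ?thesis using hpds_redraw[OF assms(3)] hpds_limit_sequence[OF assms(3)] by simp
qed

end
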